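(* Assume $W_c$ satisfies Assumption 2. Then for all integers $k,n\ge2$, \[ \log P_j(k,n)\le\inf_{s\in(0,\frac12]}\left[\frac{-nsR+(n-1)\,U\big[W_s,W_c,\uparrow;\tfrac{k-1}{n-1}\big](s)}{1-s}+\frac{\overline\xi_{W_s}(s)+\overline\xi_{W_c}(s)}{1-s}\right]. \]
   Context: Setup. $\mathcal M$ is a finite set and $W_s=\{W_s(m|m')\}$ an irreducible aperiodic transition matrix on $\mathcal M$; the message $M^k$ has law $P_{M^k}(m^k)=P_{M_1}(m_1)\prod_{i=2}^kW_s(m_i|m_{i-1})$ for an initial distribution $P_{M_1}$. $\mathcal X$ is a finite abelian group, $\mathcal Z$ a finite set, $W_c=\{W_c(x,z|x',z')\}$ an irreducible aperiodic transition matrix on $\mathcal X\times\mathcal Z$, and $(X^n,Z^n)$ has law $P_{X^nZ^n}(x^n,z^n)=P_{X_1Z_1}(x_1,z_1)\prod_{i=2}^nW_c(x_i,z_i|x_{i-1},z_{i-1})$ for an initial distribution $P_{X_1Z_1}$. The channel maps input $\tilde x^n\in\mathcal X^n$ to output $(x^n,z^n)$ with probability $P_{X^nZ^n}(x^n-\tilde x^n,z^n)$. A code is $(\mathsf e,\mathsf d)$ with $\mathsf e:\mathcal M^k\to\mathcal X^n$, $\mathsf d:(\mathcal X\times\mathcal Z)^n\to\mathcal M^k$; $P_j(k,n)$ is the infimum over codes of the average (over $P_{M^k}$) decoding error probability. $R:=\log|\mathcal X|$. Assumption 2: either (i) for every $\theta\in(-\infty,1)$ and $z,z'$, $\sum_xW_c(x,z|x',z')^{1-\theta}$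 does not depend on $x'$, or (ii) $|\mathcal Z|=1$. Either case implies that $W_{c,Z}(z|z'):=\sum_xW_c(x,z|x',z')$ is independent of $x'$. Perron–Frobenius notation: entrywise powers $a^t$ of transition probabilities are taken to be $0$ when $a=0$. For a nonnegative irreducible matrix $A$, $\lambda(A)$ is its Perron–Frobenius eigenvalue and $v_A$ the positive vector with $\sum_iv_A(i)A(i,j)=\lambda(A)v_A(j)$, normalized so $\min_iv_A(i)=1$. Quantities. $\theta H^{W_s}_{1-\theta}(M):=\log\lambda(A^s_\theta)$ with $A^s_\theta(m,m'):=W_s(m|m')^{1-\theta}$. For a transition matrix $V$ on $\mathcal Z$ with $V(z|z')>0$ whenever $W_{c,Z}(z|z')>0$, $H^{W_c|V}_{1-\theta}(X|Z):=\frac1\theta\log\lambda\big(W_c(x,z|x',z')^{1-\theta}V(z|z')^\theta\big)$, and $H^{W_c,\uparrow}_{1-\theta}(X|Z):=\max_VH^{W_c|V}_{1-\theta}(X|Z)$. For $r>0$: $U[W_s,W_c,\uparrow;r](\theta):=r\theta H^{W_s}_{1-\theta}(M)+\theta H^{W_c,\uparrow}_{1-\theta}(X|Z)$. $\overline\xi_{W_s}(\theta):=\log(v_{A^s_\theta}\cdot w^s_\theta)$ with $w^s_\theta(m):=P_{M_1}(m)^{1-\theta}$. If case (i) holds: $K_\theta(z,z'):=\big[\sum_xW_c(x,z|x',z')^{1-\theta}\big]^{\frac1{1-\theta}}$, $w^c_\theta(z):=\big[\sum_xP_{X_1Z_1}(x,z)^{1-\theta}\big]^{\frac1{1-\theta}}$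 and $\overline\xi_{W_c}(\theta):=\log(v_{K_\theta}\cdot w^c_\theta)$. Otherwise ($|\mathcal Z|=1$, $W_c$ viewed as $W_c(x|x')$ on $\mathcal X$): $\overline\xi_{W_c}(\theta):=\log(v_{B_\theta}\cdot w_\theta)$ with $B_\theta(x,x'):=W_c(x|x')^{1-\theta}$, $w_\theta(x):=P_{X_1}(x)^{1-\theta}$. *)

theory Defs
  imports "HOL-Analysis.Analysis"
begin

text \<open>Transition matrices are functions W with W a b = W(a|b) (probability of going
  to a from b).\<close>

definition stochastic :: "('a::finite \<Rightarrow> 'a \<Rightarrow> real) \<Rightarrow> bool" where
  "stochastic W \<longleftrightarrow> (\<forall>a b. 0 \<le> W a b) \<and> (\<forall>b. (\<Sum>a\<in>UNIV. W a b) = 1)"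

definition prob_vec :: "('a::finite \<Rightarrow> real) \<Rightarrow> bool" where
  "prob_vec P \<longleftrightarrow> (\<forall>a. 0 \<le> P a) \<and> (\<Sum>a\<in>UNIV. P a) = 1"

definition step_rel :: "('a \<Rightarrow> 'a \<Rightarrow> real) \<Rightarrow> ('a \<times> 'a) set" where
  "step_rel W = {(b, a). W a b > 0}"

definition irreducible_mat :: "('a::finite \<Rightarrow> 'a \<Rightarrow> real) \<Rightarrow> bool" where
  "irreducible_mat W \<longleftrightarrow> (\<forall>a b. (a, b) \<in> (step_rel W)\<^sup>+)"

definition aperiodic_mat :: "('a::finite \<Rightarrow> 'a \<Rightarrow> real) \<Rightarrow> bool" where
  "aperiodic_mat W \<longleftrightarrow> (\<forall>a. Gcd {n::nat. 0 < n \<and> (a, a) \<in> (step_rel W) ^^ n} = 1)"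

definition irr_aper_chain :: "('a::finite \<Rightarrow> 'a \<Rightarrow> real) \<Rightarrow> bool" where
  "irr_aper_chain W \<longleftrightarrow> stochastic W \<and> irreducible_mat W \<and> aperiodic_mat W"

definition pf_root :: "('a::finite \<Rightarrow> 'a \<Rightarrow> real) \<Rightarrow> real" where
  "pf_root A = (THE r. \<exists>v. (\<forall>i. 0 < v i) \<and> (\<forall>j. (\<Sum>i\<in>UNIV. v i * A i j) = r * v j))"

definition pf_vec :: "('a::finite \<Rightarrow> 'a \<Rightarrow> real) \<Rightarrow> 'a \<Rightarrow> real" where
  "pf_vec A = (THE v. (\<forall>i. 0 < v i) \<and> (\<forall>j. (\<Sum>i\<in>UNIV. v i * A i j) = pf_root A * v j)
                     \<and> Min (range v) = 1)"

definition dotp :: "('a::finite \<Rightarrow> real) \<Rightarrow> ('a \<Rightarrow> real) \<Rightarrow> real" where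
  "dotp v w = (\<Sum>i\<in>UNIV. v i * w i)"

definition markov_prob :: "('a \<Rightarrow> real) \<Rightarrow> ('a \<Rightarrow> 'a \<Rightarrow> real) \<Rightarrow> 'a list \<Rightarrow> real" where
  "markov_prob P1 W xs =
     (case xs of [] \<Rightarrow> 1
      | x # _ \<Rightarrow> P1 x * (\<Prod>i\<in>{1..<length xs}. W (xs ! i) (xs ! (i - 1))))"

text \<open>Average error probability of code (e, d) for block lengths k, n.  The channel
  output (x^n, z^n) has probability P_{X^nZ^n}(x^n - e(m^k), z^n).\<close>
definition code_error ::
  "('m::finite \<Rightarrow> real) \<Rightarrow> ('m \<Rightarrow> 'm \<Rightarrow> real) \<Rightarrow>
   ('x::{finite,ab_group_add} \<times> 'z::finite \<Rightarrow> real) \<Rightarrow> ('x \<times> 'z \<Rightarrow> 'x \<times> 'z \<Rightarrow> real) \<Rightarrow>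
   nat \<Rightarrow> nat \<Rightarrow> ('m list \<Rightarrow> 'x list) \<Rightarrow> (('x \<times> 'z) list \<Rightarrow> 'm list) \<Rightarrow> real" where
  "code_error PM1 Ws PXZ1 Wc k n e d =
     (\<Sum>ms\<in>{ms. length ms = k}. markov_prob PM1 Ws ms *
        (\<Sum>ys\<in>{ys. length ys = n}.
            markov_prob PXZ1 Wc (map2 (\<lambda>(x, z) t. (x - t, z)) ys (e ms)) *
            (if d ys \<noteq> ms then 1 else 0)))"

definition Pj ::
  "('m::finite \<Rightarrow> real) \<Rightarrow> ('m \<Rightarrow> 'm \<Rightarrow> real) \<Rightarrow>
   ('x::{finite,ab_group_add} \<times> 'z::finite \<Rightarrow> real) \<Rightarrow> ('x \<times> 'z \<Rightarrow> 'x \<times> 'z \<Rightarrow> real) \<Rightarrow>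
   nat \<Rightarrow> nat \<Rightarrow> real" where
  "Pj PM1 Ws PXZ1 Wc k n =
     Inf {code_error PM1 Ws PXZ1 Wc k n e d | e d.
            \<forall>ms. length ms = k \<longrightarrow> length (e ms) = n}"

definition assm2_i :: "('x::{finite,ab_group_add} \<times> 'z::finite \<Rightarrow> 'x \<times> 'z \<Rightarrow> real) \<Rightarrow> bool" where
  "assm2_i Wc \<longleftrightarrow> (\<forall>\<theta>::real. \<theta> < 1 \<longrightarrow> (\<forall>z z' x1 x2.
      (\<Sum>x\<in>UNIV. Wc (x, z) (x1, z') powr (1 - \<theta>)) = (\<Sum>x\<in>UNIV. Wc (x, z) (x2, z') powr (1 - \<theta>))))"

definition assm2 :: "('x::{finite,ab_group_add} \<times> 'z::finite \<Rightarrow> 'x \<times> 'z \<Rightarrow> real) \<Rightarrow> bool" where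
  "assm2 Wc \<longleftrightarrow> assm2_i Wc \<or> CARD('z) = 1"

text \<open>Marginal W_{c,Z}(z|z') (independent of x' under Assumption 2; evaluated at x' = 0).\<close>
definition WcZ :: "('x::{finite,ab_group_add} \<times> 'z::finite \<Rightarrow> 'x \<times> 'z \<Rightarrow> real) \<Rightarrow> 'z \<Rightarrow> 'z \<Rightarrow> real" where
  "WcZ Wc z z' = (\<Sum>x\<in>UNIV. Wc (x, z) (0, z'))"

text \<open>theta * H^{W_s}_{1-theta}(M) = log lambda(A^s_theta).\<close>
definition As :: "('m \<Rightarrow> 'm \<Rightarrow> real) \<Rightarrow> real \<Rightarrow> 'm \<Rightarrow> 'm \<Rightarrow> real" where
  "As Ws \<theta> m m' = Ws m m' powr (1 - \<theta>)"

definition thetaH_s :: "('m::finite \<Rightarrow> 'm \<Rightarrow> real) \<Rightarrow> real \<Rightarrow> real" where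
  "thetaH_s Ws \<theta> = ln (pf_root (As Ws \<theta>))"

definition H_cond_V ::
  "('x::{finite,ab_group_add} \<times> 'z::finite \<Rightarrow> 'x \<times> 'z \<Rightarrow> real) \<Rightarrow> ('z \<Rightarrow> 'z \<Rightarrow> real) \<Rightarrow> real \<Rightarrow> real" where
  "H_cond_V Wc V \<theta> =
     (1 / \<theta>) * ln (pf_root (\<lambda>(x, z) (x', z'). Wc (x, z) (x', z') powr (1 - \<theta>) * V z z' powr \<theta>))"

definition admissible_V :: "('x::{finite,ab_group_add} \<times> 'z::finite \<Rightarrow> 'x \<times> 'z \<Rightarrow> real) \<Rightarrow> ('z \<Rightarrow> 'z \<Rightarrow> real) \<Rightarrow> bool" where
  "admissible_V Wc V \<longleftrightarrow> stochastic V \<and> (\<forall>z z'. WcZ Wc z z' > 0 \<longrightarrow> V z z' > 0)"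

definition H_up :: "('x::{finite,ab_group_add} \<times> 'z::finite \<Rightarrow> 'x \<times> 'z \<Rightarrow> real) \<Rightarrow> real \<Rightarrow> real" where
  "H_up Wc \<theta> = (SUP V \<in> {V. admissible_V Wc V}. H_cond_V Wc V \<theta>)"

definition U_up ::
  "('m::finite \<Rightarrow> 'm \<Rightarrow> real) \<Rightarrow> ('x::{finite,ab_group_add} \<times> 'z::finite \<Rightarrow> 'x \<times> 'z \<Rightarrow> real) \<Rightarrow>
   real \<Rightarrow> real \<Rightarrow> real" where
  "U_up Ws Wc r \<theta> = r * thetaH_s Ws \<theta> + \<theta> * H_up Wc \<theta>"

definition xi_s :: "('m::finite \<Rightarrow> real) \<Rightarrow> ('m \<Rightarrow> 'm \<Rightarrow> real) \<Rightarrow> real \<Rightarrow> real" where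
  "xi_s PM1 Ws \<theta> = ln (dotp (pf_vec (As Ws \<theta>)) (\<lambda>m. PM1 m powr (1 - \<theta>)))"

definition K_mat :: "('x::{finite,ab_group_add} \<times> 'z::finite \<Rightarrow> 'x \<times> 'z \<Rightarrow> real) \<Rightarrow> real \<Rightarrow> 'z \<Rightarrow> 'z \<Rightarrow> real" where
  "K_mat Wc \<theta> z z' = (\<Sum>x\<in>UNIV. Wc (x, z) (0, z') powr (1 - \<theta>)) powr (1 / (1 - \<theta>))"

definition xi_c ::
  "('x::{finite,ab_group_add} \<times> 'z::finite \<Rightarrow> real) \<Rightarrow> ('x \<times> 'z \<Rightarrow> 'x \<times> 'z \<Rightarrow> real) \<Rightarrow> real \<Rightarrow> real" where
  "xi_c PXZ1 Wc \<theta> =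
     (if assm2_i Wc then
        ln (dotp (pf_vec (K_mat Wc \<theta>))
                 (\<lambda>z. (\<Sum>x\<in>UNIV. PXZ1 (x, z) powr (1 - \<theta>)) powr (1 / (1 - \<theta>))))
      else
        (let z0 = (undefined :: 'z) in
         ln (dotp (pf_vec (\<lambda>x x'. Wc (x, z0) (x', z0) powr (1 - \<theta>)))
                  (\<lambda>x. PXZ1 (x, z0) powr (1 - \<theta>)))))"

end

theory Submission
  imports Defs
begin

text \<open>Gallager's random coding argument (uniform i.i.d.\ codewords, maximum-likelihood decoding,
  \<open>\<rho> = s / (1 - s)\<close>) bounds the error probability by \<open>(\<Sum>\<^sub>m P(m)\<^bsup>1-s\<^esup>)\<^bsup>1/(1-s)\<^esup>\<close> times
  the sum over outputs \<open>y\<close> of (the average over inputs \<open>c\<close> of \<open>P(y - c)\<^bsup>1-s\<^esup>\<close>)\<open>\<^bsup>1/(1-s)\<^esup>\<close>.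
  Both are sums over paths of Markov chains, hence bounded by powers of Perron--Frobenius
  eigenvalues times the Perron eigenvector paired with the initial distribution. Under
  Assumption 2 (i) the average over inputs collapses the channel to the chain \<open>K\<^sub>\<theta>\<close> on \<open>Z\<close>,
  and tilting \<open>K\<^sub>\<theta>\<close> by its Perron eigenvector yields an admissible \<open>V\<close> relating its eigenvalue
  to \<^const>\<open>H_up\<close>; with a single state the channel is additive Markov noise on \<open>X\<close>.\<close>

lemma finite_lists_length_eq_UNIV: "finite {xs::'a::finite list. length xs = n}"
  using finite_lists_length_eq[of "UNIV::'a set" n] by simp

lemma card_lists_length_eq_UNIV: "card {xs::'a::finite list. length xs = n} = CARD('a) ^ n"
  using card_lists_length_eq[of "UNIV::'a set" n] by simp

lemma sum_lists_length_Suc: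
  "(\<Sum>xs\<in>{xs::'a::finite list. length xs = Suc n}. f xs) =
   (\<Sum>x\<in>UNIV. \<Sum>xs\<in>{xs. length xs = n}. f (x # xs))"
proof -
  have eq: "{xs::'a list. length xs = Suc n} = case_prod (#) ` (UNIV \<times> {xs. length xs = n})"
    by (auto simp: length_Suc_conv image_iff)
  have "inj_on (case_prod (#)) (UNIV \<times> {xs::'a list. length xs = n})"
    by (auto simp: inj_on_def)
  then show ?thesis
    unfolding eq by (simp add: sum.reindex sum.cartesian_product split_def)
qed

lemma sum_UNIV_pair:
  fixes f :: "'x::finite \<times> 'z::finite \<Rightarrow> real"
  shows "(\<Sum>b\<in>UNIV. f b) = (\<Sum>z\<in>UNIV. \<Sum>x\<in>UNIV. f (x, z))"
  by (subst sum.swap) (simp flip: UNIV_Times_UNIV add: sum.cartesian_product)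

lemma sum_UNIV_snd:
  fixes f :: "'z::finite \<Rightarrow> real"
  shows "(\<Sum>b\<in>(UNIV::('x::finite \<times> 'z) set). f (snd b)) = real CARD('x) * (\<Sum>z\<in>UNIV. f z)"
  by (simp add: sum_UNIV_pair sum_distrib_left)

lemma sum_UNIV_diff_reindex:
  fixes f :: "'x::{finite,ab_group_add} \<Rightarrow> real"
  shows "(\<Sum>t\<in>UNIV. f (x - t)) = (\<Sum>t\<in>UNIV. f t)"
  by (rule sum.reindex_bij_witness[of _ "\<lambda>t. x - t" "\<lambda>t. x - t"]) auto

text \<open>Transitions are read as \<open>A next previous\<close>, as in \<^const>\<open>markov_prob\<close>.\<close>

fun path_weight :: "('b \<Rightarrow> 'b \<Rightarrow> real) \<Rightarrow> 'b \<Rightarrow> 'b list \<Rightarrow> real" where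
  "path_weight A u [] = 1"
| "path_weight A u (y # ys) = A y u * path_weight A y ys"

lemma markov_prob_Cons: "markov_prob P1 W (x # ys) = P1 x * path_weight W x ys"
proof -
  have "(\<Prod>i\<in>{1..<Suc (length ys)}. W ((x # ys) ! i) ((x # ys) ! (i - 1))) = path_weight W x ys"
  proof (induction ys arbitrary: x)
    case (Cons y ys)
    have "(\<Prod>i\<in>{1..<Suc (length (y # ys))}. W ((x # y # ys) ! i) ((x # y # ys) ! (i - 1)))
        = W y x * (\<Prod>i\<in>{1..<Suc (length ys)}. W ((x # y # ys) ! Suc i) ((x # y # ys) ! (Suc i - 1)))"
      by (simp add: prod.atLeast_Suc_lessThan prod.shift_bounds_Suc_ivl del: prod.op_ivl_Suc)
    also have "(\<Prod>i\<in>{1..<Suc (length ys)}. W ((x # y # ys) ! Suc i) ((x # y # ys) ! (Suc i - 1)))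
        = (\<Prod>i\<in>{1..<Suc (length ys)}. W ((y # ys) ! i) ((y # ys) ! (i - 1)))"
      by (rule prod.cong) (auto simp: nth_Cons split: nat.splits)
    finally show ?case using Cons.IH by simp
  qed simp
  then show ?thesis unfolding markov_prob_def by simp
qed

lemma path_weight_nonneg: "(\<And>a b. 0 \<le> A a b) \<Longrightarrow> 0 \<le> path_weight A u ys"
  by (induction ys arbitrary: u) auto

lemma path_weight_powr:
  "(\<And>a b. 0 \<le> A a b) \<Longrightarrow> path_weight A u ys powr p = path_weight (\<lambda>a b. A a b powr p) u ys"
  by (induction ys arbitrary: u) (simp_all add: powr_mult path_weight_nonneg)

lemma path_weight_cong_snd:
  "snd u = snd u' \<Longrightarrow> path_weight (\<lambda>b' b. f b' (snd b)) u y = path_weight (\<lambda>b' b. f b' (snd b)) u' y"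
  by (cases y) auto

lemma markov_prob_nonneg:
  assumes "\<And>x. 0 \<le> P1 x" "\<And>a b. 0 \<le> W a b" shows "0 \<le> markov_prob P1 W xs"
  using assms by (cases xs) (auto simp: markov_prob_def[of _ _ "[]"] markov_prob_Cons path_weight_nonneg)

lemma sum_path_weight_le:
  fixes A :: "'b::finite \<Rightarrow> 'b \<Rightarrow> real"
  assumes A: "\<And>a b. 0 \<le> A a b" and ev: "\<And>u. (\<Sum>b\<in>UNIV. A b u * v b) \<le> \<mu> * v u"
    and v1: "\<And>u. 1 \<le> v u" and mu: "0 \<le> \<mu>"
  shows "(\<Sum>ys\<in>{ys. length ys = m}. path_weight A u ys) \<le> \<mu> ^ m * v u"
proof (induction m arbitrary: u)
  case 0
  then show ?case using v1[of u] by simp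
next
  case (Suc m)
  have "(\<Sum>ys\<in>{ys. length ys = Suc m}. path_weight A u ys)
      = (\<Sum>b\<in>UNIV. A b u * (\<Sum>ys\<in>{ys. length ys = m}. path_weight A b ys))"
    by (simp add: sum_lists_length_Suc sum_distrib_left)
  also have "\<dots> \<le> (\<Sum>b\<in>UNIV. A b u * (\<mu> ^ m * v b))"
    by (intro sum_mono mult_left_mono Suc A)
  also have "\<dots> = \<mu> ^ m * (\<Sum>b\<in>UNIV. A b u * v b)"
    by (simp add: sum_distrib_left algebra_simps)
  also have "\<dots> \<le> \<mu> ^ m * (\<mu> * v u)"
    by (intro mult_left_mono ev) (use mu in simp)
  finally show ?case by (simp add: ac_simps)
qed

subsection \<open>Perron--Frobenius theory for irreducible nonnegative matrices\<close>

definition pos_left_eigenpair :: "('a::finite \<Rightarrow> 'a \<Rightarrow> real) \<Rightarrow> real \<Rightarrow> ('a \<Rightarrow> real) \<Rightarrow> bool" where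
  "pos_left_eigenpair A r v \<longleftrightarrow> (\<forall>i. 0 < v i) \<and> (\<forall>j. (\<Sum>i\<in>UNIV. v i * A i j) = r * v j)"

lemma pos_left_eigenpairD:
  "pos_left_eigenpair A r v \<Longrightarrow> 0 < v i"
  "pos_left_eigenpair A r v \<Longrightarrow> (\<Sum>i\<in>UNIV. A i j * v i) = r * v j"
  unfolding pos_left_eigenpair_def by (auto simp: mult.commute)

lemma ex_min_UNIV: "\<exists>j::'a::finite. \<forall>i. (f j :: real) \<le> f i"
proof -
  have "Min (range f) \<in> range f" by (rule Min_in) auto
  then obtain j where "f j = Min (range f)" by (metis rangeE)
  then have "\<forall>i. f j \<le> f i" by simp
  then show ?thesis by blast
qed

lemma ex_max_UNIV: "\<exists>j::'a::finite. \<forall>i. (f i :: real) \<le> f j"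
proof -
  have "Max (range f) \<in> range f" by (rule Max_in) auto
  then obtain j where "f j = Max (range f)" by (metis rangeE)
  then have "\<forall>i. f i \<le> f j" by simp
  then show ?thesis by blast
qed

text \<open>Compare the two eigenvectors at a point where \<open>u\<^sub>1 / u\<^sub>2\<close> is minimal.\<close>

lemma pos_left_eigenpair_root_le:
  assumes A: "\<And>a b. 0 \<le> A a b" and 1: "pos_left_eigenpair A r1 u1" and 2: "pos_left_eigenpair A r2 u2"
  shows "r2 \<le> r1"
proof -
  obtain j where j: "\<forall>i. u1 j / u2 j \<le> u1 i / u2 i" using ex_min_UNIV[of "\<lambda>i. u1 i / u2 i"] by blast
  define t where "t = u1 j / u2 j"
  have p1: "\<And>i. 0 < u1 i" and p2: "\<And>i. 0 < u2 i" using 1 2 by (auto dest: pos_left_eigenpairD)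
  have le: "t * u2 i \<le> u1 i" for i
    using j[rule_format, of i] p2[of i] unfolding t_def by (simp add: pos_le_divide_eq)
  have "r2 * u1 j = t * (r2 * u2 j)" unfolding t_def using p2[of j] by (simp add: field_simps)
  also have "\<dots> = t * (\<Sum>i\<in>UNIV. u2 i * A i j)" using 2 by (simp add: pos_left_eigenpair_def)
  also have "\<dots> = (\<Sum>i\<in>UNIV. (t * u2 i) * A i j)" by (simp add: sum_distrib_left mult.assoc)
  also have "\<dots> \<le> (\<Sum>i\<in>UNIV. u1 i * A i j)"
    by (intro sum_mono mult_right_mono le A)
  also have "\<dots> = r1 * u1 j" using 1 by (simp add: pos_left_eigenpair_def)
  finally show ?thesis using p1[of j] by simp
qed

lemma pf_root_eqI:
  assumes A: "\<And>a b. 0 \<le> A a b" and eig: "pos_left_eigenpair A r v"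
  shows "pf_root A = r"
  unfolding pf_root_def
proof (rule the_equality)
  show "\<exists>v. (\<forall>i. 0 < v i) \<and> (\<forall>j. (\<Sum>i\<in>UNIV. v i * A i j) = r * v j)"
    using eig by (auto simp: pos_left_eigenpair_def)
next
  fix r' assume "\<exists>v. (\<forall>i. 0 < v i) \<and> (\<forall>j. (\<Sum>i\<in>UNIV. v i * A i j) = r' * v j)"
  then obtain v' where eig': "pos_left_eigenpair A r' v'" by (auto simp: pos_left_eigenpair_def)
  show "r' = r"
    using pos_left_eigenpair_root_le[OF A eig eig'] pos_left_eigenpair_root_le[OF A eig' eig] by simp
qed

lemma irreducible_left_eigen_zero:
  fixes A :: "'a::finite \<Rightarrow> 'a \<Rightarrow> real"
  assumes A: "\<And>a b. 0 \<le> A a b" and irr: "irreducible_mat A" and d: "\<And>i. 0 \<le> d i"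
    and ev: "\<And>j. (\<Sum>i\<in>UNIV. d i * A i j) = r * d j" and z: "d k = 0"
  shows "d i = 0"
proof -
  have step: "d b = 0" if "d a = 0" "(a, b) \<in> step_rel A" for a b
  proof -
    have "(\<Sum>i\<in>UNIV. d i * A i a) = 0" using ev[of a] that by simp
    then have "d b * A b a = 0"
      by (subst (asm) sum_nonneg_eq_0_iff) (auto intro: mult_nonneg_nonneg d A)
    moreover have "A b a > 0" using that(2) by (simp add: step_rel_def)
    ultimately show ?thesis by simp
  qed
  have "(k, i) \<in> (step_rel A)\<^sup>+" using irr by (simp add: irreducible_mat_def)
  then show ?thesis
    by (induction rule: trancl_induct) (use z step in auto)
qed

lemma pos_left_eigenpair_root_pos:
  fixes A :: "'a::finite \<Rightarrow> 'a \<Rightarrow> real"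
  assumes A: "\<And>a b. 0 \<le> A a b" and irr: "irreducible_mat A" and eig: "pos_left_eigenpair A r v"
  shows "0 < r"
proof -
  fix j :: 'a
  have "(j, j) \<in> (step_rel A)\<^sup>+" using irr by (simp add: irreducible_mat_def)
  then obtain i where "(j, i) \<in> step_rel A" by (meson converse_tranclE)
  then have "0 < v i * A i j" using eig by (simp add: step_rel_def pos_left_eigenpair_def)
  also have "\<dots> \<le> (\<Sum>i\<in>UNIV. v i * A i j)"
    by (rule member_le_sum) (use A eig in \<open>auto simp: pos_left_eigenpair_def less_imp_le\<close>)
  also have "\<dots> = r * v j" using eig by (simp add: pos_left_eigenpair_def)
  finally show ?thesis using pos_left_eigenpairD(1)[OF eig, of j] by (simp add: zero_less_mult_iff)
qed

text \<open>Subtracting the largest multiple of \<open>u\<^sub>2\<close> that stays below \<open>u\<^sub>1\<close> leaves a nonnegative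
  left eigenvector with a zero entry, which must vanish by irreducibility.\<close>

lemma pos_left_eigenpair_proportional:
  fixes A :: "'a::finite \<Rightarrow> 'a \<Rightarrow> real"
  assumes A: "\<And>a b. 0 \<le> A a b" and irr: "irreducible_mat A"
    and 1: "pos_left_eigenpair A r u1" and 2: "pos_left_eigenpair A r u2"
  shows "\<exists>c>0. \<forall>i. u1 i = c * u2 i"
proof -
  obtain j where j: "\<forall>i. u1 j / u2 j \<le> u1 i / u2 i" using ex_min_UNIV[of "\<lambda>i. u1 i / u2 i"] by blast
  define t where "t = u1 j / u2 j"
  have p1: "\<And>i. 0 < u1 i" and p2: "\<And>i. 0 < u2 i" using 1 2 by (auto dest: pos_left_eigenpairD)
  have le: "t * u2 i \<le> u1 i" for i
    using j[rule_format, of i] p2[of i] unfolding t_def by (simp add: pos_le_divide_eq)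
  have "u1 i - t * u2 i = 0" for i
  proof (rule irreducible_left_eigen_zero[OF A irr, where r = r and k = j])
    show "0 \<le> u1 i - t * u2 i" for i using le[of i] by simp
    show "(\<Sum>i\<in>UNIV. (u1 i - t * u2 i) * A i k) = r * (u1 k - t * u2 k)" for k
    proof -
      have "(\<Sum>i\<in>UNIV. (u1 i - t * u2 i) * A i k)
          = (\<Sum>i\<in>UNIV. u1 i * A i k) - t * (\<Sum>i\<in>UNIV. u2 i * A i k)"
        by (simp add: left_diff_distrib sum_subtractf sum_distrib_left mult.assoc)
      then show ?thesis using 1 2 by (simp add: pos_left_eigenpair_def algebra_simps)
    qed
    show "u1 j - t * u2 j = 0" using p2[of j] unfolding t_def by simp
  qed
  moreover have "t > 0" unfolding t_def using p1 p2 by simp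
  ultimately show ?thesis by auto
qed

definition prob_simplex :: "(real^'a::finite) set" where
  "prob_simplex = {x. (\<forall>i. 0 \<le> x$i) \<and> (\<Sum>i\<in>UNIV. x$i) = 1}"

lemma compact_prob_simplex: "compact prob_simplex"
proof -
  have "bounded (prob_simplex :: (real^'a) set)"
    unfolding bounded_iff
  proof (intro exI ballI)
    fix x :: "real^'a" assume "x \<in> prob_simplex"
    then show "norm x \<le> 1" using norm_le_l1_cart[of x] unfolding prob_simplex_def by simp
  qed
  moreover have "closed (prob_simplex :: (real^'a) set)"
  proof -
    have "(prob_simplex :: (real^'a) set) = {x. \<forall>i. 0 \<le> x$i} \<inter> {x. (\<Sum>i\<in>UNIV. x$i) = 1}"
      unfolding prob_simplex_def by auto
    moreover have "closed {x::real^'a. (\<Sum>i\<in>UNIV. x$i) = 1}"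
      by (intro closed_Collect_eq continuous_intros)
    ultimately show ?thesis using closed_positive_orthant by (metis closed_Int)
  qed
  ultimately show ?thesis by (simp add: compact_eq_bounded_closed)
qed

lemma convex_prob_simplex: "convex prob_simplex"
  unfolding convex_def prob_simplex_def by (auto simp: sum.distrib sum_distrib_left[symmetric])

lemma prob_simplex_nonempty: "(prob_simplex :: (real^'a::finite) set) \<noteq> {}"
proof -
  have "(\<chi> i. 1 / real CARD('a)) \<in> (prob_simplex :: (real^'a) set)" unfolding prob_simplex_def by simp
  then show ?thesis by blast
qed

text \<open>Existence via Brouwer's fixed point theorem for the map \<open>x \<mapsto> (x A + x) / \<parallel>x A + x\<parallel>\<^sub>1\<close>
  on the probability simplex; a fixed point is a left eigenvector, positive by irreducibility.\<close>

lemma pos_left_eigenpair_exists: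
  fixes A :: "'a::finite \<Rightarrow> 'a \<Rightarrow> real"
  assumes A: "\<And>a b. 0 \<le> A a b" and irr: "irreducible_mat A"
  shows "\<exists>r v. pos_left_eigenpair A r v"
proof -
  define den :: "real^'a \<Rightarrow> real" where "den x = (\<Sum>j\<in>UNIV. \<Sum>i\<in>UNIV. x$i * A i j) + 1" for x
  define f :: "real^'a \<Rightarrow> real^'a" where
    "f x = (1 / den x) *\<^sub>R (\<chi> j. (\<Sum>i\<in>UNIV. x$i * A i j) + x$j)" for x
  have den1: "1 \<le> den x" if "x \<in> prob_simplex" for x
    using that A unfolding prob_simplex_def den_def by (auto intro!: sum_nonneg mult_nonneg_nonneg)
  have "continuous_on prob_simplex f"
    unfolding f_def den_def
    by (intro continuous_intros) (use den1 in \<open>force simp: den_def\<close>)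
  moreover have "f \<in> prob_simplex \<rightarrow> prob_simplex"
  proof
    fix x :: "real^'a" assume x: "x \<in> prob_simplex"
    have "(\<Sum>j\<in>UNIV. (\<Sum>i\<in>UNIV. x$i * A i j) + x$j) = den x"
      using x unfolding den_def prob_simplex_def by (simp add: sum.distrib)
    then show "f x \<in> prob_simplex"
      using x den1[OF x] A unfolding prob_simplex_def f_def
      by (auto simp: sum_divide_distrib[symmetric]
          intro!: divide_nonneg_pos add_nonneg_nonneg sum_nonneg mult_nonneg_nonneg)
  qed
  ultimately obtain x where x: "x \<in> prob_simplex" "f x = x"
    using brouwer[OF compact_prob_simplex convex_prob_simplex prob_simplex_nonempty] by blast
  have ev: "(\<Sum>i\<in>UNIV. x$i * A i j) = (den x - 1) * x$j" for j
  proof -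
    have "((\<Sum>i\<in>UNIV. x$i * A i j) + x$j) / den x = x$j"
      using arg_cong[OF x(2), of "\<lambda>y. y $ j"] unfolding f_def by simp
    then show ?thesis using den1[OF x(1)] by (simp add: field_simps)
  qed
  have nn: "\<And>i. 0 \<le> x$i" using x(1) unfolding prob_simplex_def by simp
  have pos: "0 < x$i" for i
  proof (rule ccontr)
    assume "\<not> 0 < x$i"
    then have "x$i = 0" using nn[of i] by simp
    then have "\<And>k. x$k = 0"
      using irreducible_left_eigen_zero[OF A irr, of "\<lambda>k. x$k" "den x - 1" i] nn ev by blast
    then show False using x(1) unfolding prob_simplex_def by simp
  qed
  have "pos_left_eigenpair A (den x - 1) (\<lambda>i. x$i)"
    unfolding pos_left_eigenpair_def using pos ev by simp
  then show ?thesis by blast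
qed

lemma pf_vec_eqI:
  fixes A :: "'a::finite \<Rightarrow> 'a \<Rightarrow> real"
  assumes A: "\<And>a b. 0 \<le> A a b" and irr: "irreducible_mat A"
    and eig: "pos_left_eigenpair A r v" and v: "Min (range v) = 1"
  shows "pf_vec A = v"
  unfolding pf_vec_def
proof (rule the_equality)
  show "(\<forall>i. 0 < v i) \<and> (\<forall>j. (\<Sum>i\<in>UNIV. v i * A i j) = pf_root A * v j) \<and> Min (range v) = 1"
    using eig v pf_root_eqI[OF A eig] by (simp add: pos_left_eigenpair_def)
next
  fix w assume w: "(\<forall>i. 0 < w i) \<and> (\<forall>j. (\<Sum>i\<in>UNIV. w i * A i j) = pf_root A * w j)
    \<and> Min (range w) = 1"
  then have "pos_left_eigenpair A r w" using pf_root_eqI[OF A eig] by (simp add: pos_left_eigenpair_def)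
  then obtain c where c: "c > 0" "\<forall>i. w i = c * v i"
    using pos_left_eigenpair_proportional[OF A irr _ eig] by blast
  have "\<And>i. 1 \<le> v i" "\<exists>i. v i = 1" "\<And>i. 1 \<le> w i" "\<exists>i. w i = 1"
    using v w Min_le[of "range v"] Min_in[of "range v"] Min_le[of "range w"] Min_in[of "range w"]
    by fastforce+
  then have "c = 1" using c by (metis mult.right_neutral mult_le_cancel_left_pos order_antisym)
  then show "w = v" using c by auto
qed

theorem perron_frobenius:
  fixes A :: "'a::finite \<Rightarrow> 'a \<Rightarrow> real"
  assumes A: "\<And>a b. 0 \<le> A a b" and irr: "irreducible_mat A"
  shows "pos_left_eigenpair A (pf_root A) (pf_vec A)" "0 < pf_root A" "\<And>i. 1 \<le> pf_vec A i"
proof -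
  obtain r v where eig: "pos_left_eigenpair A r v" using pos_left_eigenpair_exists[OF A irr] by blast
  have root: "pf_root A = r" by (rule pf_root_eqI[OF A eig])
  have pos: "\<And>i. 0 < v i" using eig by (simp add: pos_left_eigenpair_def)
  obtain j where j: "\<forall>i. v j \<le> v i" using ex_min_UNIV[of v] by blast
  define v' where "v' i = v i / v j" for i
  have eig': "pos_left_eigenpair A r v'"
    using eig pos unfolding pos_left_eigenpair_def v'_def
    by (auto simp: sum_divide_distrib[symmetric] field_simps)
  have v'_ge: "1 \<le> v' i" for i using j pos[of j] unfolding v'_def by simp
  have "Min (range v') = 1"
    by (rule Min_eqI) (use v'_ge pos[of j] in \<open>auto simp: v'_def intro: rangeI[of _ j, simplified]\<close>)
  then have "pf_vec A = v'" by (rule pf_vec_eqI[OF A irr eig'])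
  then show "pos_left_eigenpair A (pf_root A) (pf_vec A)" "\<And>i. 1 \<le> pf_vec A i"
    using eig' v'_ge root by auto
  show "0 < pf_root A" using pos_left_eigenpair_root_pos[OF A irr eig] root by simp
qed

text \<open>Without a positive left eigenvector \<^const>\<open>pf_root\<close> is the junk value \<open>THE r. False\<close>,
  which therefore has to appear in any bound valid for all nonnegative matrices.\<close>

lemma ln_pf_root_le:
  fixes A :: "'a::finite \<Rightarrow> 'a \<Rightarrow> real"
  assumes A: "\<And>a b. 0 \<le> A a b" and A1: "\<And>a b. A a b \<le> 1"
  shows "ln (pf_root A) \<le> max (ln (real CARD('a))) (ln (THE r::real. False))"
proof (cases "\<exists>r v. pos_left_eigenpair A r v")
  case True
  then obtain r v where eig: "pos_left_eigenpair A r v" by blast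
  have pos: "\<And>i. 0 < v i" using eig by (simp add: pos_left_eigenpair_def)
  obtain j where j: "\<forall>i. v i \<le> v j" using ex_max_UNIV[of v] by blast
  have "r * v j = (\<Sum>i\<in>UNIV. v i * A i j)" using eig by (simp add: pos_left_eigenpair_def)
  also have "\<dots> \<le> (\<Sum>i\<in>(UNIV::'a set). v j)"
    by (intro sum_mono order_trans[OF mult_left_mono[OF A1] ]) (use pos j in \<open>auto intro: less_imp_le\<close>)
  finally have "r \<le> real CARD('a)" using pos[of j] by simp
  moreover have "0 \<le> (\<Sum>i\<in>UNIV. v i * A i j)"
    using A pos by (intro sum_nonneg) (simp add: less_imp_le)
  then have "0 \<le> r * v j" using eig by (simp add: pos_left_eigenpair_def)
  then have "0 \<le> r" using pos[of j] by (simp add: zero_le_mult_iff)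
  ultimately have "ln r \<le> ln (real CARD('a))"
    by (cases "r = 0") auto
  then show ?thesis using pf_root_eqI[OF A eig] by simp
next
  case False
  then have "(\<lambda>r. \<exists>v. (\<forall>i. 0 < v i) \<and> (\<forall>j. (\<Sum>i\<in>UNIV. v i * A i j) = r * v j)) = (\<lambda>r. False)"
    by (auto simp: pos_left_eigenpair_def fun_eq_iff)
  then have "pf_root A = (THE r::real. False)"
    unfolding pf_root_def by simp
  then show ?thesis by simp
qed

subsection \<open>Gallager's random coding bound\<close>

lemma sum_powr_le_card_mean_powr:
  fixes h :: "'e \<Rightarrow> real"
  assumes E: "finite E" "E \<noteq> {}" and h: "\<And>e. e \<in> E \<Longrightarrow> 0 \<le> h e" and r: "0 < r" "r \<le> 1"
  shows "(\<Sum>e\<in>E. h e powr r) \<le> card E * ((\<Sum>e\<in>E. h e) / card E) powr r"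
proof -
  define N where "N = real (card E)"
  have N: "0 < N" using E by (simp add: N_def card_gt_0_iff)
  define a where "a = (\<Sum>e\<in>E. h e) / N"
  have a0: "0 \<le> a" unfolding a_def using h N by (simp add: sum_nonneg)
  show ?thesis
  proof (cases "a = 0")
    case True
    then have "(\<Sum>e\<in>E. h e) = 0" using N unfolding a_def by simp
    then have "\<forall>e\<in>E. h e = 0" using sum_nonneg_eq_0_iff[OF E(1)] h by blast
    then show ?thesis by simp
  next
    case False
    then have apos: "0 < a" using a0 by simp
    text \<open>Tangent line of the concave function \<open>t \<mapsto> t\<^sup>r\<close> at the mean \<open>a\<close>.\<close>
    have tangent: "h e powr r \<le> a powr r * (r * (h e / a) + (1 - r))" if e: "e \<in> E" for e
    proof (cases "h e = 0")
      case True
      then show ?thesis using apos r by simp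
    next
      case False
      then have hp: "0 < h e" using h[OF e] by simp
      have "(h e / a) powr r * 1 powr (1 - r) \<le> r * (h e / a) + (1 - r) * 1"
        by (rule Youngs_inequality_0) (use r hp apos in auto)
      then have "a powr r * (h e / a) powr r \<le> a powr r * (r * (h e / a) + (1 - r))"
        by (intro mult_left_mono) auto
      then show ?thesis using hp apos by (simp add: powr_divide)
    qed
    have "(\<Sum>e\<in>E. h e powr r) \<le> (\<Sum>e\<in>E. a powr r * (r * (h e / a) + (1 - r)))"
      by (rule sum_mono) (rule tangent)
    also have "\<dots> = a powr r * (r * ((\<Sum>e\<in>E. h e) / a) + (1 - r) * N)"
      by (simp add: N_def sum.distrib sum_distrib_left[symmetric] sum_divide_distrib[symmetric])
    also have "(\<Sum>e\<in>E. h e) / a = N" using apos N unfolding a_def by (auto simp: zero_less_divide_iff)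
    also have "a powr r * (r * N + (1 - r) * N) = N * a powr r" by (simp add: algebra_simps)
    finally show ?thesis by (simp only: a_def N_def)
  qed
qed

lemma sum_PiE_insert:
  assumes "m \<notin> B"
  shows "(\<Sum>e\<in>PiE (insert m B) (\<lambda>_. C). F e) = (\<Sum>c\<in>C. \<Sum>g\<in>PiE B (\<lambda>_. C). F (g(m := c)))"
proof -
  have inj: "inj_on (\<lambda>(c, g). g(m := c)) (C \<times> PiE B (\<lambda>_. C))"
  proof (rule inj_onI, clarify)
    fix c g c' g' assume g: "g \<in> PiE B (\<lambda>_. C)" and g': "g' \<in> PiE B (\<lambda>_. C)"
      and eq: "g(m := c) = g'(m := c')"
    have "g m = g' m" using PiE_arb[OF g assms] PiE_arb[OF g' assms] by simp
    then show "c = c' \<and> g = g'" using eq by (metis fun_upd_eqD fun_upd_triv fun_upd_upd)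
  qed
  show ?thesis
    unfolding PiE_insert_eq sum.reindex[OF inj] comp_def
    by (subst sum.cartesian_product) (simp add: case_prod_beta)
qed

lemma sum_PiE_coord:
  assumes B: "finite B" "b \<in> B"
  shows "(\<Sum>g\<in>PiE B (\<lambda>_. C). \<phi> (g b)) = real (card C ^ (card B - 1)) * (\<Sum>c\<in>C. \<phi> c)"
proof -
  obtain B' where BB: "B = insert b B'" "b \<notin> B'" using B(2) by (meson Set.set_insert)
  have "finite B'" using B(1) BB(1) by simp
  then have "card (PiE B' (\<lambda>_. C)) = card C ^ (card B - 1)" using BB by (simp add: card_PiE)
  then show ?thesis
    unfolding BB(1) sum_PiE_insert[OF BB(2)] by (simp add: sum_distrib_left)
qed

lemma sum_PiE_sum_coord:
  assumes B: "finite B" and C: "finite C" "C \<noteq> {}"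
  shows "(\<Sum>g\<in>PiE B (\<lambda>_. C). \<Sum>b\<in>B. \<phi> b (g b))
       = real (card C ^ card B) / card C * (\<Sum>b\<in>B. \<Sum>c\<in>C. \<phi> b c)"
proof (cases "B = {}")
  case False
  have "(\<Sum>g\<in>PiE B (\<lambda>_. C). \<Sum>b\<in>B. \<phi> b (g b)) = (\<Sum>b\<in>B. \<Sum>g\<in>PiE B (\<lambda>_. C). \<phi> b (g b))"
    by (rule sum.swap)
  also have "\<dots> = (\<Sum>b\<in>B. real (card C ^ (card B - 1)) * (\<Sum>c\<in>C. \<phi> b c))"
    by (intro sum.cong refl sum_PiE_coord[OF B])
  also have "real (card C ^ (card B - 1)) = real (card C ^ card B) / card C"
    using B C False by (simp add: power_eq_if card_gt_0_iff)
  finally show ?thesis by (simp add: sum_distrib_left)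
qed simp

lemma exists_le_average:
  fixes F :: "'e \<Rightarrow> real" and b :: real
  assumes "finite E" "E \<noteq> {}" "(\<Sum>e\<in>E. F e) \<le> card E * b"
  shows "\<exists>e\<in>E. F e \<le> b"
proof (rule ccontr)
  assume "\<not> ?thesis"
  then have "(\<Sum>e\<in>E. b) < (\<Sum>e\<in>E. F e)" using assms(1,2) by (intro sum_strict_mono) auto
  then show False using assms(3) by simp
qed

lemma sum_PiE_powr_sum_coord_le:
  assumes B: "finite B" and C: "finite C" "C \<noteq> {}"
    and \<phi>: "\<And>b c. 0 \<le> \<phi> b c" and r: "0 < r" "r \<le> 1"
  shows "(\<Sum>g\<in>PiE B (\<lambda>_. C). (\<Sum>b\<in>B. \<phi> b (g b)) powr r)
       \<le> real (card C ^ card B) * ((\<Sum>b\<in>B. \<Sum>c\<in>C. \<phi> b c) / card C) powr r"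
proof -
  define E where "E = PiE B (\<lambda>_. C)"
  have E: "finite E" "E \<noteq> {}" "real (card E) = real (card C ^ card B)"
    unfolding E_def using B C by (auto simp: finite_PiE PiE_eq_empty_iff card_PiE)
  have "(\<Sum>g\<in>E. (\<Sum>b\<in>B. \<phi> b (g b)) powr r) \<le> card E * ((\<Sum>g\<in>E. \<Sum>b\<in>B. \<phi> b (g b)) / card E) powr r"
    by (rule sum_powr_le_card_mean_powr[OF E(1,2) _ r]) (simp add: \<phi> sum_nonneg)
  also have "(\<Sum>g\<in>E. \<Sum>b\<in>B. \<phi> b (g b)) / card E = (\<Sum>b\<in>B. \<Sum>c\<in>C. \<phi> b c) / card C"
    using E(1,2) C unfolding E_def sum_PiE_sum_coord[OF B C] E(3)[unfolded E_def]
    by (simp add: card_gt_0_iff)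
  finally show ?thesis unfolding E_def E(3)[unfolded E_def] .
qed

text \<open>The Gallager bound for a single message \<open>m\<close> and output \<open>y\<close>, averaged over all codebooks
  \<open>e \<in> C\<^sup>A\<close>: the codeword of \<open>m\<close> and the other codewords are independent, and Jensen's inequality
  moves the average inside the \<open>\<rho>\<close>-th power.\<close>

lemma average_gallager_term_le:
  fixes P :: "'m \<Rightarrow> real" and Q :: "'c \<Rightarrow> 'y \<Rightarrow> real"
  assumes A: "finite A" "m \<in> A" and C: "finite C" "C \<noteq> {}"
    and P: "\<And>m. 0 \<le> P m" and Q: "\<And>c y. 0 \<le> Q c y" and r: "0 < \<rho>" "\<rho> \<le> 1"
  shows "(\<Sum>e\<in>PiE A (\<lambda>_. C). (P m * Q (e m) y) powr \<sigma>
            * (\<Sum>m'\<in>A-{m}. (P m' * Q (e m') y) powr \<sigma>) powr \<rho>)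
    \<le> real (card C ^ card A) * (P m powr \<sigma> * ((\<Sum>c\<in>C. Q c y powr \<sigma>) / card C)
        * ((\<Sum>m'\<in>A. P m' powr \<sigma>) * ((\<Sum>c\<in>C. Q c y powr \<sigma>) / card C)) powr \<rho>)"
proof -
  define B where "B = A - {m}"
  have AB: "A = insert m B" "m \<notin> B" "finite B" using A unfolding B_def by auto
  define K where "K = real (card C)"
  have K: "0 < K" using C unfolding K_def by (simp add: card_gt_0_iff)
  define g where "g = (\<Sum>c\<in>C. Q c y powr \<sigma>) / K"
  have g: "0 \<le> g" unfolding g_def using K by (simp add: sum_nonneg)
  define H where "H f = (\<Sum>m'\<in>B. (P m' * Q (f m') y) powr \<sigma>)" for f
  have "(\<Sum>e\<in>PiE A (\<lambda>_. C). (P m * Q (e m) y) powr \<sigma>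
            * (\<Sum>m'\<in>A-{m}. (P m' * Q (e m') y) powr \<sigma>) powr \<rho>)
      = (\<Sum>c\<in>C. \<Sum>f\<in>PiE B (\<lambda>_. C). (P m * Q c y) powr \<sigma> * H f powr \<rho>)"
  proof -
    have "\<And>c f. (\<Sum>m'\<in>B. (P m' * Q ((f(m := c)) m') y) powr \<sigma>) = H f"
      unfolding H_def by (rule sum.cong) (use AB(2) in auto)
    then show ?thesis
      unfolding AB(1) sum_PiE_insert[OF AB(2)] using AB(2) by (simp add: B_def[symmetric])
  qed
  also have "\<dots> = (\<Sum>c\<in>C. (P m * Q c y) powr \<sigma>) * (\<Sum>f\<in>PiE B (\<lambda>_. C). H f powr \<rho>)"
    by (rule sum_product[symmetric])
  also have "(\<Sum>c\<in>C. (P m * Q c y) powr \<sigma>) = P m powr \<sigma> * (K * g)"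
    using P Q K by (simp add: powr_mult sum_distrib_left[symmetric] g_def)
  also have "P m powr \<sigma> * (K * g) * (\<Sum>f\<in>PiE B (\<lambda>_. C). H f powr \<rho>)
      \<le> P m powr \<sigma> * (K * g) * (K ^ card B * ((\<Sum>m'\<in>A. P m' powr \<sigma>) * g) powr \<rho>)"
  proof (rule mult_left_mono)
    have "(\<Sum>m'\<in>B. \<Sum>c\<in>C. (P m' * Q c y) powr \<sigma>) = (\<Sum>m'\<in>B. P m' powr \<sigma>) * (K * g)"
      using P Q K by (simp add: powr_mult sum_product g_def)
    then have "(\<Sum>f\<in>PiE B (\<lambda>_. C). H f powr \<rho>) \<le> K ^ card B * ((\<Sum>m'\<in>B. P m' powr \<sigma>) * g) powr \<rho>"
      using sum_PiE_powr_sum_coord_le[OF AB(3) C _ r, of "\<lambda>m' c. (P m' * Q c y) powr \<sigma>"] K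
      unfolding H_def K_def by simp
    also have "((\<Sum>m'\<in>B. P m' powr \<sigma>) * g) powr \<rho> \<le> ((\<Sum>m'\<in>A. P m' powr \<sigma>) * g) powr \<rho>"
      unfolding AB(1) using AB(2,3) g r by (intro powr_mono2 mult_right_mono) (auto simp: sum_nonneg)
    finally show "(\<Sum>f\<in>PiE B (\<lambda>_. C). H f powr \<rho>) \<le> K ^ card B * ((\<Sum>m'\<in>A. P m' powr \<sigma>) * g) powr \<rho>"
      using K by simp
  qed (use K g in simp)
  also have "\<dots> = K ^ card A * (P m powr \<sigma> * g * ((\<Sum>m'\<in>A. P m' powr \<sigma>) * g) powr \<rho>)"
    using AB by (simp add: algebra_simps)
  finally show ?thesis unfolding g_def K_def by simp
qed

lemma sum_codebooks_gallager_le: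
  fixes P :: "'m \<Rightarrow> real" and Q :: "'c \<Rightarrow> 'y \<Rightarrow> real"
  assumes A: "finite A" and C: "finite C" "C \<noteq> {}"
    and P: "\<And>m. 0 \<le> P m" and Q: "\<And>c y. 0 \<le> Q c y" and r: "0 < \<rho>" "\<rho> \<le> 1"
  shows "(\<Sum>e\<in>PiE A (\<lambda>_. C). \<Sum>m\<in>A. \<Sum>y\<in>Y. (P m * Q (e m) y) powr \<sigma>
            * (\<Sum>m'\<in>A-{m}. (P m' * Q (e m') y) powr \<sigma>) powr \<rho>)
    \<le> real (card C ^ card A) * ((\<Sum>m\<in>A. P m powr \<sigma>) powr (1 + \<rho>)
        * (\<Sum>y\<in>Y. ((\<Sum>c\<in>C. Q c y powr \<sigma>) / card C) powr (1 + \<rho>)))"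
proof -
  define S where "S = (\<Sum>m\<in>A. P m powr \<sigma>)"
  define g where "g y = (\<Sum>c\<in>C. Q c y powr \<sigma>) / card C" for y
  have S0: "0 \<le> S" unfolding S_def by (simp add: sum_nonneg)
  have g0: "0 \<le> g y" for y unfolding g_def by (simp add: sum_nonneg)
  have "(\<Sum>e\<in>PiE A (\<lambda>_. C). \<Sum>m\<in>A. \<Sum>y\<in>Y. (P m * Q (e m) y) powr \<sigma>
            * (\<Sum>m'\<in>A-{m}. (P m' * Q (e m') y) powr \<sigma>) powr \<rho>)
      = (\<Sum>m\<in>A. \<Sum>y\<in>Y. \<Sum>e\<in>PiE A (\<lambda>_. C). (P m * Q (e m) y) powr \<sigma>
            * (\<Sum>m'\<in>A-{m}. (P m' * Q (e m') y) powr \<sigma>) powr \<rho>)"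
    by (simp add: sum.swap[of _ "PiE A _"] sum.swap[of _ "PiE A _" Y])
  also have "\<dots> \<le> (\<Sum>m\<in>A. \<Sum>y\<in>Y. real (card C ^ card A) * (P m powr \<sigma> * g y * (S * g y) powr \<rho>))"
    unfolding S_def g_def by (intro sum_mono average_gallager_term_le A C P Q r)
  also have "\<dots> = real (card C ^ card A) * (S * (\<Sum>y\<in>Y. g y * (S * g y) powr \<rho>))"
  proof -
    define c where "c = real (card C ^ card A)"
    have "(\<Sum>m\<in>A. \<Sum>y\<in>Y. c * (P m powr \<sigma> * g y * (S * g y) powr \<rho>))
        = (\<Sum>y\<in>Y. \<Sum>m\<in>A. c * (P m powr \<sigma> * (g y * (S * g y) powr \<rho>)))"
      by (subst sum.swap) (simp add: mult.assoc)
    also have "\<dots> = c * (S * (\<Sum>y\<in>Y. g y * (S * g y) powr \<rho>))"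
      unfolding S_def
      by (simp only: sum_distrib_left[symmetric] sum_distrib_right[symmetric])
    finally show ?thesis unfolding c_def .
  qed
  also have "S * (\<Sum>y\<in>Y. g y * (S * g y) powr \<rho>) = S * S powr \<rho> * (\<Sum>y\<in>Y. g y * g y powr \<rho>)"
    using S0 g0 by (simp add: powr_mult sum_distrib_left algebra_simps)
  also have "\<dots> = S powr (1 + \<rho>) * (\<Sum>y\<in>Y. g y powr (1 + \<rho>))"
    using powr_mult_base[OF S0] powr_mult_base[OF g0] by simp
  finally show ?thesis unfolding S_def g_def .
qed

lemma ml_decoder_error_le:
  fixes a :: "'m \<Rightarrow> 'y \<Rightarrow> real"
  assumes A: "finite A" "A \<noteq> {}" and a: "\<And>m y. 0 \<le> a m y"
    and \<sigma>\<rho>: "0 < \<sigma>" "0 < \<rho>" "\<sigma> + \<sigma> * \<rho> = 1"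
  shows "\<exists>d. (\<Sum>m\<in>A. \<Sum>y\<in>Y. a m y * (if d y \<noteq> m then 1 else 0))
    \<le> (\<Sum>m\<in>A. \<Sum>y\<in>Y. a m y powr \<sigma> * (\<Sum>m'\<in>A-{m}. a m' y powr \<sigma>) powr \<rho>)"
proof -
  have "\<exists>m\<in>A. \<forall>m'\<in>A. a m' y \<le> a m y" for y
  proof -
    have "Max ((\<lambda>m. a m y) ` A) \<in> (\<lambda>m. a m y) ` A" using A by simp
    then obtain m where "m \<in> A" "a m y = Max ((\<lambda>m. a m y) ` A)" by (metis imageE)
    moreover have "\<forall>m'\<in>A. a m' y \<le> a m y" using A calculation(2) by simp
    ultimately show ?thesis by blast
  qed
  then obtain d where d: "\<And>y. d y \<in> A" "\<And>y m'. m' \<in> A \<Longrightarrow> a m' y \<le> a (d y) y"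
    by metis
  have "a m y * (if d y \<noteq> m then 1 else 0) \<le> a m y powr \<sigma> * (\<Sum>m'\<in>A-{m}. a m' y powr \<sigma>) powr \<rho>"
    if m: "m \<in> A" for m y
  proof (cases "d y = m")
    case False
    text \<open>An erroneous decision means that a competitor \<open>d y\<close> is at least as likely as \<open>m\<close>.\<close>
    have "a m y powr \<sigma> \<le> a (d y) y powr \<sigma>"
      by (intro powr_mono2 a d m) (use \<sigma>\<rho> in simp)
    also have "\<dots> \<le> (\<Sum>m'\<in>A-{m}. a m' y powr \<sigma>)"
      by (rule member_le_sum) (use d(1) False A(1) in auto)
    finally have "(a m y powr \<sigma>) powr \<rho> \<le> (\<Sum>m'\<in>A-{m}. a m' y powr \<sigma>) powr \<rho>"
      by (intro powr_mono2) (use \<sigma>\<rho> in simp_all)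
    then have "a m y powr \<sigma> * (a m y powr \<sigma>) powr \<rho>
        \<le> a m y powr \<sigma> * (\<Sum>m'\<in>A-{m}. a m' y powr \<sigma>) powr \<rho>"
      by (rule mult_left_mono) simp
    moreover have "a m y powr \<sigma> * (a m y powr \<sigma>) powr \<rho> = a m y"
    proof (cases "a m y = 0")
      case False
      then have "a m y powr \<sigma> * (a m y powr \<sigma>) powr \<rho> = a m y powr (\<sigma> + \<sigma> * \<rho>)"
        by (simp add: powr_powr powr_add)
      then show ?thesis using False a[of m y] \<sigma>\<rho>(3) by simp
    qed simp
    ultimately show ?thesis using False by simp
  qed simp
  then have "(\<Sum>m\<in>A. \<Sum>y\<in>Y. a m y * (if d y \<noteq> m then 1 else 0))
    \<le> (\<Sum>m\<in>A. \<Sum>y\<in>Y. a m y powr \<sigma> * (\<Sum>m'\<in>A-{m}. a m' y powr \<sigma>) powr \<rho>)"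
    by (intro sum_mono)
  then show ?thesis by blast
qed

theorem gallager_random_coding:
  fixes P :: "'m \<Rightarrow> real" and Q :: "'c \<Rightarrow> 'y \<Rightarrow> real"
  assumes A: "finite A" "A \<noteq> {}" and C: "finite C" "C \<noteq> {}"
    and P: "\<And>m. 0 \<le> P m" and Q: "\<And>c y. 0 \<le> Q c y" and s: "0 < s" "s \<le> 1/2"
  shows "\<exists>e\<in>PiE A (\<lambda>_. C). \<exists>d. (\<Sum>m\<in>A. P m * (\<Sum>y\<in>Y. Q (e m) y * (if d y \<noteq> m then 1 else 0)))
     \<le> (\<Sum>m\<in>A. P m powr (1 - s)) powr (1 / (1 - s))
        * (\<Sum>y\<in>Y. ((\<Sum>c\<in>C. Q c y powr (1 - s)) / card C) powr (1 / (1 - s)))"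
proof -
  define \<rho> where "\<rho> = s / (1 - s)"
  have \<rho>: "0 < \<rho>" "\<rho> \<le> 1" "1 / (1 - s) = 1 + \<rho>" "(1 - s) + (1 - s) * \<rho> = 1"
    unfolding \<rho>_def using s by (auto simp: field_simps)
  define E where "E = PiE A (\<lambda>_. C)"
  have E: "finite E" "E \<noteq> {}" "card E = card C ^ card A"
    unfolding E_def using A C by (auto simp: finite_PiE PiE_eq_empty_iff card_PiE)
  define F where "F e = (\<Sum>m\<in>A. \<Sum>y\<in>Y. (P m * Q (e m) y) powr (1 - s)
      * (\<Sum>m'\<in>A-{m}. (P m' * Q (e m') y) powr (1 - s)) powr \<rho>)" for e
  define bound where "bound = (\<Sum>m\<in>A. P m powr (1 - s)) powr (1 / (1 - s))
        * (\<Sum>y\<in>Y. ((\<Sum>c\<in>C. Q c y powr (1 - s)) / card C) powr (1 / (1 - s)))"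
  have "(\<Sum>e\<in>E. F e) \<le> card E * bound"
    using sum_codebooks_gallager_le[OF A(1) C P Q \<rho>(1,2), where Y = Y and \<sigma> = "1 - s"] E(3)
    unfolding E_def F_def bound_def \<rho>(3) by simp
  then obtain e where e: "e \<in> E" "F e \<le> bound" using exists_le_average[OF E(1,2)] by blast
  have "\<exists>d. (\<Sum>m\<in>A. \<Sum>y\<in>Y. P m * Q (e m) y * (if d y \<noteq> m then 1 else 0)) \<le> F e"
    unfolding F_def by (rule ml_decoder_error_le[OF A]) (use P Q s \<rho> in auto)
  then obtain d where "(\<Sum>m\<in>A. \<Sum>y\<in>Y. P m * Q (e m) y * (if d y \<noteq> m then 1 else 0)) \<le> F e" ..
  then have "(\<Sum>m\<in>A. P m * (\<Sum>y\<in>Y. Q (e m) y * (if d y \<noteq> m then 1 else 0))) \<le> bound"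
    using e(2) by (simp add: sum_distrib_left mult.assoc)
  then show ?thesis using e(1) unfolding E_def bound_def by blast
qed

lemma prob_vec_nonneg: "prob_vec P \<Longrightarrow> 0 \<le> P a"
  by (simp add: prob_vec_def)

lemma irr_aper_chain_nonneg: "irr_aper_chain W \<Longrightarrow> 0 \<le> W a b"
  by (simp add: irr_aper_chain_def stochastic_def)

lemma stochastic_nonneg: "stochastic W \<Longrightarrow> 0 \<le> W a b"
  by (simp add: stochastic_def)

lemma stochastic_le_1:
  fixes W :: "'a::finite \<Rightarrow> 'a \<Rightarrow> real"
  assumes "stochastic W" shows "W a b \<le> 1"
proof -
  have "W a b \<le> (\<Sum>a'\<in>UNIV. W a' b)"
    by (rule member_le_sum) (use assms in \<open>auto simp: stochastic_def\<close>)
  then show ?thesis using assms by (simp add: stochastic_def)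
qed

lemma prob_vec_ex_pos:
  fixes P :: "'a::finite \<Rightarrow> real"
  assumes "prob_vec P" shows "\<exists>j. 0 < P j"
proof (rule ccontr)
  assume "\<not> ?thesis"
  then have "\<forall>j. P j = 0" using assms unfolding prob_vec_def by (meson not_less order_antisym)
  then show False using assms unfolding prob_vec_def by simp
qed

lemma irreducible_mat_powr:
  assumes "\<And>a b. 0 \<le> W a b" "0 < t" "irreducible_mat W"
  shows "irreducible_mat (\<lambda>a b. W a b powr t)"
proof -
  have "step_rel (\<lambda>a b. W a b powr t) = step_rel W"
    using assms(1,2) unfolding step_rel_def by (auto simp: order_le_less)
  then show ?thesis using assms(3) by (simp add: irreducible_mat_def)
qed

lemma irreducible_mat_map:
  assumes "irreducible_mat W" "surj f" "\<And>a b. (a, b) \<in> step_rel W \<Longrightarrow> (f a, f b) \<in> step_rel W'"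
  shows "irreducible_mat W'"
  unfolding irreducible_mat_def
proof (intro allI)
  fix a' b'
  obtain a b where "a' = f a" "b' = f b" using assms(2) by (metis surjD)
  have "(a, b) \<in> (step_rel W)\<^sup>+" using assms(1) by (simp add: irreducible_mat_def)
  then show "(a', b') \<in> (step_rel W')\<^sup>+"
    unfolding \<open>a' = f a\<close> \<open>b' = f b\<close>
    by (induction rule: trancl_induct) (auto intro: assms(3) trancl_into_trancl)
qed

lemma dotp_pos:
  fixes v w :: "'a::finite \<Rightarrow> real"
  assumes "\<And>i. 1 \<le> v i" "\<And>i. 0 \<le> w i" "0 < w j"
  shows "0 < dotp v w"
proof -
  have "0 < v j * w j" using assms(1)[of j] assms(3) by simp
  also have "\<dots> \<le> dotp v w" unfolding dotp_def
    by (rule member_le_sum) (use assms in \<open>auto intro: mult_nonneg_nonneg order_trans[OF zero_le_one]\<close>)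
  finally show ?thesis .
qed

definition source_sum :: "('m::finite \<Rightarrow> real) \<Rightarrow> ('m \<Rightarrow> 'm \<Rightarrow> real) \<Rightarrow> nat \<Rightarrow> real \<Rightarrow> real" where
  "source_sum PM1 Ws k s = (\<Sum>ms\<in>{ms. length ms = k}. markov_prob PM1 Ws ms powr (1 - s))"

lemma irreducible_As:
  assumes "irr_aper_chain Ws" "s < 1"
  shows "irreducible_mat (As Ws s)"
  unfolding As_def[abs_def]
  by (rule irreducible_mat_powr[OF irr_aper_chain_nonneg[OF assms(1)]])
    (use assms in \<open>auto simp: irr_aper_chain_def\<close>)

lemma source_sum_le:
  fixes PM1 :: "'m::finite \<Rightarrow> real" and Ws :: "'m \<Rightarrow> 'm \<Rightarrow> real"
  assumes P: "prob_vec PM1" and W: "irr_aper_chain Ws" and s: "s < 1" and k: "1 \<le> k"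
  shows "source_sum PM1 Ws k s
       \<le> pf_root (As Ws s) ^ (k - 1) * dotp (pf_vec (As Ws s)) (\<lambda>m. PM1 m powr (1 - s))"
proof -
  note Wn = irr_aper_chain_nonneg[OF W]
  note Pn = prob_vec_nonneg[OF P]
  have As: "As Ws s = (\<lambda>a b. Ws a b powr (1 - s))" by (simp add: As_def[abs_def])
  note pf = perron_frobenius[OF _ irreducible_As[OF W s], unfolded As, simplified]
  define lam where "lam = pf_root (As Ws s)"
  define v where "v = pf_vec (As Ws s)"
  obtain k' where k': "k = Suc k'" using k by (cases k) auto
  have "source_sum PM1 Ws k s
      = (\<Sum>m\<in>UNIV. PM1 m powr (1 - s) * (\<Sum>ms\<in>{ms. length ms = k'}. path_weight (As Ws s) m ms))"
    unfolding source_sum_def k' sum_lists_length_Suc markov_prob_Cons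
    using Pn Wn by (simp add: powr_mult path_weight_nonneg path_weight_powr sum_distrib_left As)
  also have "\<dots> \<le> (\<Sum>m\<in>UNIV. PM1 m powr (1 - s) * (lam ^ k' * v m))"
    unfolding lam_def v_def As
    by (intro sum_mono mult_left_mono sum_path_weight_le)
      (use pos_left_eigenpairD(2)[OF pf(1)] pf(2,3) in auto)
  also have "\<dots> = lam ^ (k - 1) * dotp v (\<lambda>m. PM1 m powr (1 - s))"
    unfolding k' dotp_def by (simp add: sum_distrib_left algebra_simps)
  finally show ?thesis unfolding lam_def v_def .
qed

text \<open>The output \<open>ys\<close> arises from the input \<open>c\<close> through the noise \<open>noise ys c\<close>, whose law
  is the Markov chain \<open>(X\<^sup>n, Z\<^sup>n)\<close>.\<close>

definition noise :: "('x::ab_group_add \<times> 'z) list \<Rightarrow> 'x list \<Rightarrow> ('x \<times> 'z) list" where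
  "noise ys c = map2 (\<lambda>(x, z) t. (x - t, z)) ys c"

lemma noise_Cons: "noise ((x, z) # ys) (t # c) = (x - t, z) # noise ys c"
  by (simp add: noise_def)

lemma noise_Nil: "noise [] c = []"
  by (simp add: noise_def)

definition channel_sum ::
  "('x::{finite,ab_group_add} \<times> 'z::finite \<Rightarrow> real) \<Rightarrow> ('x \<times> 'z \<Rightarrow> 'x \<times> 'z \<Rightarrow> real) \<Rightarrow>
   nat \<Rightarrow> real \<Rightarrow> real" where
  "channel_sum PXZ1 Wc n s =
     (\<Sum>y\<in>{y. length y = n}.
        ((\<Sum>c\<in>{c::'x list. length c = n}. markov_prob PXZ1 Wc (noise y c) powr (1 - s))
          / card {c::'x list. length c = n}) powr (1 / (1 - s)))"

lemma sum_path_weight_noise_Cons: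
  fixes W :: "'x::{finite,ab_group_add} \<times> 'z::finite \<Rightarrow> 'x \<times> 'z \<Rightarrow> real"
  assumes W: "\<And>a b. 0 \<le> W a b"
  shows "(\<Sum>c\<in>{c. length c = Suc m}. path_weight W u (noise ((x, z) # y) c) powr \<sigma>)
     = (\<Sum>t\<in>UNIV. W (x - t, z) u powr \<sigma>
          * (\<Sum>c\<in>{c. length c = m}. path_weight W (x - t, z) (noise y c) powr \<sigma>))"
  unfolding sum_lists_length_Suc noise_Cons
  using W by (simp add: powr_mult path_weight_nonneg sum_distrib_left)

lemma sum_markov_prob_noise_Cons:
  fixes W :: "'x::{finite,ab_group_add} \<times> 'z::finite \<Rightarrow> 'x \<times> 'z \<Rightarrow> real"
  assumes W: "\<And>a b. 0 \<le> W a b" and P: "\<And>a. 0 \<le> P1 a"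
  shows "(\<Sum>c\<in>{c. length c = Suc m}. markov_prob P1 W (noise ((x, z) # y) c) powr \<sigma>)
     = (\<Sum>t\<in>UNIV. P1 (x - t, z) powr \<sigma>
          * (\<Sum>c\<in>{c. length c = m}. path_weight W (x - t, z) (noise y c) powr \<sigma>))"
  unfolding sum_lists_length_Suc noise_Cons markov_prob_Cons
  using W P by (simp add: powr_mult path_weight_nonneg sum_distrib_left)

subsection \<open>Channels satisfying Assumption 2 (i)\<close>

text \<open>Like \<^const>\<open>K_mat\<close>, \<open>K_base\<close> evaluates at \<open>x' = 0\<close>; under Assumption 2 (i) this
  choice is immaterial.\<close>

definition K_base ::
  "('x::{finite,ab_group_add} \<times> 'z::finite \<Rightarrow> 'x \<times> 'z \<Rightarrow> real) \<Rightarrow> real \<Rightarrow> 'z \<Rightarrow> 'z \<Rightarrow> real" where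
  "K_base Wc s z z' = (\<Sum>x\<in>UNIV. Wc (x, z) (0, z') powr (1 - s))"

lemma K_mat_eq_K_base_powr: "K_mat Wc s z z' = K_base Wc s z z' powr (1 / (1 - s))"
  by (simp add: K_mat_def K_base_def)

lemma K_base_nonneg: "0 \<le> K_base Wc s z z'"
  by (simp add: K_base_def sum_nonneg)

lemma K_base_eq_K_mat_powr:
  assumes "s < 1" shows "K_base Wc s z z' = K_mat Wc s z z' powr (1 - s)"
  using assms K_base_nonneg[of Wc s z z'] by (simp add: K_mat_eq_K_base_powr powr_powr)

lemma assm2_i_sum_eq_K_base:
  assumes "assm2_i Wc" "s < 1"
  shows "(\<Sum>x\<in>UNIV. Wc (x, z) (x', z') powr (1 - s)) = K_base Wc s z z'"
  using assms unfolding assm2_i_def K_base_def by blast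

lemma K_base_pos:
  fixes Wc :: "'x::{finite,ab_group_add} \<times> 'z::finite \<Rightarrow> 'x \<times> 'z \<Rightarrow> real"
  assumes a2: "assm2_i Wc" and s: "s < 1" and pos: "Wc (x, z) (x', z') > 0"
  shows "K_base Wc s z z' > 0"
proof -
  have "0 < Wc (x, z) (x', z') powr (1 - s)" using pos by simp
  also have "\<dots> \<le> (\<Sum>x\<in>UNIV. Wc (x, z) (x', z') powr (1 - s))"
    by (rule member_le_sum[where f = "\<lambda>x. Wc (x, z) (x', z') powr (1 - s)"]) auto
  finally show ?thesis using assm2_i_sum_eq_K_base[OF a2 s] by simp
qed

lemma irreducible_K_mat:
  fixes Wc :: "'x::{finite,ab_group_add} \<times> 'z::finite \<Rightarrow> 'x \<times> 'z \<Rightarrow> real"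
  assumes a2: "assm2_i Wc" and s: "s < 1" and irr: "irreducible_mat Wc"
  shows "irreducible_mat (K_mat Wc s)"
proof (rule irreducible_mat_map[OF irr, of snd])
  show "surj (snd :: 'x \<times> 'z \<Rightarrow> 'z)" by (metis snd_conv surjI)
  fix a b :: "'x \<times> 'z"
  assume "(a, b) \<in> step_rel Wc"
  then have "K_base Wc s (snd b) (snd a) > 0"
    using K_base_pos[OF a2 s] by (cases a, cases b) (simp add: step_rel_def)
  then show "(snd a, snd b) \<in> step_rel (K_mat Wc s)" by (simp add: step_rel_def K_mat_eq_K_base_powr)
qed

text \<open>Summing over the inputs is summing over the \<open>x\<close>-components of the noise, which
  Assumption 2 (i) lets us do one step at a time: the result depends on the \<open>z\<close>-path only.\<close>

lemma sum_noise_path_weight_assm2_i: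
  fixes Wc :: "'x::{finite,ab_group_add} \<times> 'z::finite \<Rightarrow> 'x \<times> 'z \<Rightarrow> real"
  assumes a2: "assm2_i Wc" and W: "\<And>a b. 0 \<le> Wc a b" and s: "s < 1" and y: "length y = m"
  shows "(\<Sum>c\<in>{c. length c = m}. path_weight Wc u (noise y c) powr (1 - s))
     = path_weight (\<lambda>b' b. K_base Wc s (snd b') (snd b)) u y"
  using y
proof (induction y arbitrary: u m)
  case Nil
  then show ?case by (simp add: noise_Nil)
next
  case (Cons p y)
  obtain x z where p: "p = (x, z)" by (cases p)
  obtain m' where m: "m = Suc m'" "length y = m'" using Cons.prems by auto
  have "(\<Sum>c\<in>{c. length c = m}. path_weight Wc u (noise (p # y) c) powr (1 - s))
      = (\<Sum>t\<in>UNIV. Wc (x - t, z) u powr (1 - s))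
          * path_weight (\<lambda>b' b. K_base Wc s (snd b') (snd b)) (x, z) y"
    unfolding p m(1) sum_path_weight_noise_Cons[OF W] Cons.IH[OF m(2)]
    by (subst path_weight_cong_snd[of _ "(x, z)"]) (simp_all add: sum_distrib_right)
  also have "(\<Sum>t\<in>UNIV. Wc (x - t, z) u powr (1 - s)) = K_base Wc s z (snd u)"
    using sum_UNIV_diff_reindex[of "\<lambda>t. Wc (t, z) u powr (1 - s)"]
      assm2_i_sum_eq_K_base[OF a2 s, of z "fst u" "snd u"] by simp
  finally show ?case unfolding p by simp
qed

lemma sum_path_weight_lift_snd_le:
  fixes K :: "'z::finite \<Rightarrow> 'z \<Rightarrow> real"
  assumes Kn: "\<And>a b. 0 \<le> K a b" and irr: "irreducible_mat K"
  shows "(\<Sum>ys\<in>{ys::('x::finite \<times> 'z) list. length ys = m}. path_weight (\<lambda>b' b. K (snd b') (snd b)) u ys)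
    \<le> (real CARD('x) * pf_root K) ^ m * pf_vec K (snd u)"
proof (rule sum_path_weight_le)
  note pf = perron_frobenius[OF Kn irr]
  fix u :: "'x \<times> 'z"
  show "(\<Sum>b\<in>UNIV. K (snd b) (snd u) * pf_vec K (snd (b :: 'x \<times> 'z)))
    \<le> real CARD('x) * pf_root K * pf_vec K (snd u)"
    using sum_UNIV_snd[where f = "\<lambda>z. K z (snd u) * pf_vec K z", where 'x = 'x]
      pos_left_eigenpairD(2)[OF pf(1)] by simp
qed (use Kn perron_frobenius[OF Kn irr] in \<open>auto intro: less_imp_le\<close>)

lemma channel_term_assm2_i:
  fixes Wc :: "'x::{finite,ab_group_add} \<times> 'z::finite \<Rightarrow> 'x \<times> 'z \<Rightarrow> real"
    and PXZ :: "'x \<times> 'z \<Rightarrow> real"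
  assumes a2: "assm2_i Wc" and W: "\<And>a b. 0 \<le> Wc a b" and P: "\<And>a. 0 \<le> PXZ a"
    and s: "s < 1" and y: "length y = n"
  shows "(\<Sum>c\<in>{c::'x list. length c = Suc n}. markov_prob PXZ Wc (noise ((x, z) # y) c) powr (1 - s))
           powr (1 / (1 - s))
       = (\<Sum>x\<in>UNIV. PXZ (x, z) powr (1 - s)) powr (1 / (1 - s))
           * path_weight (\<lambda>b' b. K_mat Wc s (snd b') (snd b)) (x, z) y"
proof -
  have "(\<Sum>c\<in>{c::'x list. length c = Suc n}. markov_prob PXZ Wc (noise ((x, z) # y) c) powr (1 - s))
     = (\<Sum>t\<in>UNIV. PXZ (x - t, z) powr (1 - s))
         * path_weight (\<lambda>b' b. K_base Wc s (snd b') (snd b)) (x, z) y"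
    unfolding sum_markov_prob_noise_Cons[OF W P] sum_noise_path_weight_assm2_i[OF a2 W s y]
    by (subst path_weight_cong_snd[of _ "(x, z)"]) (simp_all add: sum_distrib_right)
  also have "(\<Sum>t\<in>UNIV. PXZ (x - t, z) powr (1 - s)) = (\<Sum>x\<in>UNIV. PXZ (x, z) powr (1 - s))"
    by (rule sum_UNIV_diff_reindex[of "\<lambda>t. PXZ (t, z) powr (1 - s)"])
  finally show ?thesis
    by (simp add: path_weight_powr[where A = "\<lambda>b' b. K_base Wc s (snd b') (snd b)", OF K_base_nonneg] powr_mult path_weight_nonneg K_base_nonneg sum_nonneg K_mat_eq_K_base_powr)
qed

lemma channel_sum_eq_assm2_i:
  fixes Wc :: "'x::{finite,ab_group_add} \<times> 'z::finite \<Rightarrow> 'x \<times> 'z \<Rightarrow> real"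
    and PXZ1 :: "'x \<times> 'z \<Rightarrow> real"
  assumes a2: "assm2_i Wc" and W: "irr_aper_chain Wc" and P: "prob_vec PXZ1" and s: "s < 1"
  shows "channel_sum PXZ1 Wc (Suc m) s
     = (\<Sum>b\<in>UNIV. (\<Sum>x\<in>UNIV. PXZ1 (x, snd b) powr (1 - s)) powr (1 / (1 - s))
          * (\<Sum>ys\<in>{ys. length ys = m}. path_weight (\<lambda>b' b. K_mat Wc s (snd b') (snd b)) (b :: 'x \<times> 'z) ys))
       / (real CARD('x) ^ Suc m) powr (1 / (1 - s))"
proof -
  define F where "F y = ((\<Sum>c\<in>{c::'x list. length c = Suc m}. markov_prob PXZ1 Wc (noise y c) powr (1 - s))
      / card {c::'x list. length c = Suc m}) powr (1 / (1 - s))" for y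
  have "F (b # ys) = (\<Sum>x\<in>UNIV. PXZ1 (x, snd b) powr (1 - s)) powr (1 / (1 - s))
      * path_weight (\<lambda>b' b. K_mat Wc s (snd b') (snd b)) b ys / (real CARD('x) ^ Suc m) powr (1 / (1 - s))"
    if "length ys = m" for b ys
    using channel_term_assm2_i[where PXZ = PXZ1 and x = "fst b" and z = "snd b",
        OF a2 irr_aper_chain_nonneg[OF W] prob_vec_nonneg[OF P] s that]
    by (simp add: F_def card_lists_length_eq_UNIV powr_divide sum_nonneg)
  then show ?thesis
    unfolding channel_sum_def F_def[symmetric] sum_lists_length_Suc[of F]
    by (simp add: sum_divide_distrib sum_distrib_left)
qed

theorem channel_sum_le_assm2_i:
  fixes Wc :: "'x::{finite,ab_group_add} \<times> 'z::finite \<Rightarrow> 'x \<times> 'z \<Rightarrow> real"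
    and PXZ1 :: "'x \<times> 'z \<Rightarrow> real"
  assumes a2: "assm2_i Wc" and W: "irr_aper_chain Wc" and P: "prob_vec PXZ1"
    and s: "s < 1" and n: "1 \<le> n"
  shows "channel_sum PXZ1 Wc n s
     \<le> real CARD('x) ^ n / real CARD('x) powr (real n / (1 - s)) * pf_root (K_mat Wc s) ^ (n - 1)
        * dotp (pf_vec (K_mat Wc s)) (\<lambda>z. (\<Sum>x\<in>UNIV. PXZ1 (x, z) powr (1 - s)) powr (1 / (1 - s)))"
proof -
  define X where "X = real CARD('x)"
  have X0: "0 < X" unfolding X_def by simp
  define K where "K = K_mat Wc s"
  have Kn: "\<And>a b. 0 \<le> K a b" unfolding K_def K_mat_eq_K_base_powr by simp
  have irrK: "irreducible_mat K" unfolding K_def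
    by (rule irreducible_K_mat[OF a2 s]) (use W in \<open>simp add: irr_aper_chain_def\<close>)
  define lam where "lam = pf_root K"
  define v where "v = pf_vec K"
  define w where "w z = (\<Sum>x\<in>UNIV. PXZ1 (x, z) powr (1 - s)) powr (1 / (1 - s))" for z
  obtain m where m: "n = Suc m" using n by (cases n) auto
  have "channel_sum PXZ1 Wc n s
      = (\<Sum>b\<in>UNIV. w (snd b) * (\<Sum>ys\<in>{ys. length ys = m}.
            path_weight (\<lambda>b' b. K (snd b') (snd b)) (b :: 'x \<times> 'z) ys)) / (X ^ n) powr (1 / (1 - s))"
    unfolding m channel_sum_eq_assm2_i[OF a2 W P s] w_def K_def X_def by simp
  also have "\<dots> \<le> (\<Sum>b\<in>UNIV. w (snd b) * ((X * lam) ^ m * v (snd (b :: 'x \<times> 'z)))) / (X ^ n) powr (1 / (1 - s))"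
    unfolding X_def lam_def v_def
    by (intro divide_right_mono sum_mono mult_left_mono sum_path_weight_lift_snd_le[OF Kn irrK])
      (simp_all add: w_def)
  also have "(\<Sum>b\<in>UNIV. w (snd b) * ((X * lam) ^ m * v (snd (b :: 'x \<times> 'z))))
      = (X * lam) ^ m * (\<Sum>b\<in>UNIV. v (snd (b :: 'x \<times> 'z)) * w (snd b))"
    by (simp add: sum_distrib_left algebra_simps)
  also have "(\<Sum>b\<in>UNIV. v (snd (b :: 'x \<times> 'z)) * w (snd b)) = X * dotp v w"
    unfolding dotp_def X_def by (rule sum_UNIV_snd)
  also have "(X * lam) ^ m * (X * dotp v w) / (X ^ n) powr (1 / (1 - s))
      = X ^ n / X powr (real n / (1 - s)) * lam ^ (n - 1) * dotp v w"
  proof -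
    have "(X ^ n) powr (1 / (1 - s)) = X powr (real n / (1 - s))"
      using X0 by (simp add: powr_realpow[symmetric] powr_powr)
    then show ?thesis unfolding m by (simp add: power_mult_distrib algebra_simps)
  qed
  finally show ?thesis unfolding X_def lam_def v_def w_def K_def .
qed

subsection \<open>Channels with a single state (Assumption 2 (ii))\<close>

lemma irreducible_single_state:
  fixes Wc :: "'x::finite \<times> 'z::finite \<Rightarrow> 'x \<times> 'z \<Rightarrow> real"
  assumes zz: "\<And>z::'z. z = z0" and W: "irreducible_mat Wc"
  shows "irreducible_mat (\<lambda>x x'. Wc (x, z0) (x', z0) powr t)"
proof (rule irreducible_mat_map[OF W, of fst])
  show "surj (fst :: 'x \<times> 'z \<Rightarrow> 'x)" by (rule surjI[of _ "\<lambda>x. (x, z0)"]) simp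
  fix a b :: "'x \<times> 'z"
  assume ab: "(a, b) \<in> step_rel Wc"
  obtain xa xb where "a = (xa, z0)" "b = (xb, z0)" using zz by (metis prod.collapse)
  with ab show "(fst a, fst b) \<in> step_rel (\<lambda>x x'. Wc (x, z0) (x', z0) powr t)"
    by (simp add: step_rel_def)
qed

lemma sum_noise_path_weight_le_single_state:
  fixes Wc :: "'x::{finite,ab_group_add} \<times> 'z::finite \<Rightarrow> 'x \<times> 'z \<Rightarrow> real"
  assumes zz: "\<And>z::'z. z = z0" and W: "\<And>a b. 0 \<le> Wc a b"
    and eig: "pos_left_eigenpair (\<lambda>x x'. Wc (x, z0) (x', z0) powr \<sigma>) lam v"
    and v1: "\<And>x. 1 \<le> v x" and lam: "0 \<le> lam" and y: "length y = m"
  shows "(\<Sum>c\<in>{c. length c = m}. path_weight Wc u (noise y c) powr \<sigma>) \<le> lam ^ m * v (fst u)"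
  using y
proof (induction y arbitrary: u m)
  case Nil
  then show ?case using v1[of "fst u"] by (simp add: noise_Nil)
next
  case (Cons p y)
  obtain x z where p: "p = (x, z)" by (cases p)
  obtain m' where m: "m = Suc m'" "length y = m'" using Cons.prems by auto
  have "(\<Sum>c\<in>{c. length c = m}. path_weight Wc u (noise (p # y) c) powr \<sigma>)
      = (\<Sum>t\<in>UNIV. Wc (x - t, z) u powr \<sigma>
          * (\<Sum>c\<in>{c. length c = m'}. path_weight Wc (x - t, z) (noise y c) powr \<sigma>))"
    unfolding p m(1) by (rule sum_path_weight_noise_Cons[OF W])
  also have "\<dots> \<le> (\<Sum>t\<in>UNIV. Wc (x - t, z) u powr \<sigma> * (lam ^ m' * v (x - t)))"
    by (intro sum_mono mult_left_mono) (use Cons.IH[OF m(2)] in auto)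
  also have "\<dots> = (\<Sum>t\<in>UNIV. Wc (t, z) u powr \<sigma> * (lam ^ m' * v t))"
    by (rule sum_UNIV_diff_reindex[of "\<lambda>t. Wc (t, z) u powr \<sigma> * (lam ^ m' * v t)"])
  also have "\<dots> = lam ^ m' * (\<Sum>t\<in>UNIV. Wc (t, z0) (fst u, z0) powr \<sigma> * v t)"
  proof -
    obtain xu where "u = (xu, z0)" using zz by (metis prod.collapse)
    then show ?thesis using zz[of z] by (simp add: sum_distrib_left algebra_simps)
  qed
  also have "\<dots> = lam ^ m' * (lam * v (fst u))" using pos_left_eigenpairD(2)[OF eig] by simp
  finally show ?case unfolding m(1) by (simp add: algebra_simps)
qed

lemma sum_noise_markov_prob_le_single_state:
  fixes Wc :: "'x::{finite,ab_group_add} \<times> 'z::finite \<Rightarrow> 'x \<times> 'z \<Rightarrow> real"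
    and PXZ1 :: "'x \<times> 'z \<Rightarrow> real"
  assumes zz: "\<And>z::'z. z = z0" and W: "irr_aper_chain Wc" and P: "prob_vec PXZ1"
    and s: "s < 1" and y: "length y = Suc m"
  defines "B \<equiv> \<lambda>x x'. Wc (x, z0) (x', z0) powr (1 - s)"
  shows "(\<Sum>c\<in>{c::'x list. length c = Suc m}. markov_prob PXZ1 Wc (noise y c) powr (1 - s))
    \<le> pf_root B ^ m * dotp (pf_vec B) (\<lambda>x. PXZ1 (x, z0) powr (1 - s))"
proof -
  note Wn = irr_aper_chain_nonneg[OF W]
  have irrB: "irreducible_mat B" unfolding B_def
    by (rule irreducible_single_state[OF zz]) (use W in \<open>simp add: irr_aper_chain_def\<close>)
  have Bn: "\<And>a b. 0 \<le> B a b" unfolding B_def by simp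
  note pf = perron_frobenius[OF Bn irrB, unfolded B_def]
  define lam where "lam = pf_root B"
  define v where "v = pf_vec B"
  obtain x z y' where yy: "y = (x, z) # y'" "length y' = m" using y by (cases y) auto
  have "(\<Sum>c\<in>{c::'x list. length c = Suc m}. markov_prob PXZ1 Wc (noise y c) powr (1 - s))
     = (\<Sum>t\<in>UNIV. PXZ1 (x - t, z) powr (1 - s)
         * (\<Sum>c\<in>{c. length c = m}. path_weight Wc (x - t, z) (noise y' c) powr (1 - s)))"
    unfolding yy by (rule sum_markov_prob_noise_Cons[OF Wn prob_vec_nonneg[OF P]])
  also have "\<dots> \<le> (\<Sum>t\<in>UNIV. PXZ1 (x - t, z) powr (1 - s) * (lam ^ m * v (x - t)))"
  proof (intro sum_mono mult_left_mono)
    fix t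
    show "(\<Sum>c\<in>{c. length c = m}. path_weight Wc (x - t, z) (noise y' c) powr (1 - s))
        \<le> lam ^ m * v (x - t)"
      using sum_noise_path_weight_le_single_state[OF zz Wn pf(1) pf(3) _ yy(2), of "(x - t, z)"] pf(2)
      unfolding lam_def v_def B_def by simp
  qed simp
  also have "\<dots> = (\<Sum>t\<in>UNIV. PXZ1 (t, z) powr (1 - s) * (lam ^ m * v t))"
    by (rule sum_UNIV_diff_reindex[of "\<lambda>t. PXZ1 (t, z) powr (1 - s) * (lam ^ m * v t)"])
  also have "\<dots> = lam ^ m * dotp v (\<lambda>x. PXZ1 (x, z0) powr (1 - s))"
    unfolding dotp_def using zz[of z] by (simp add: sum_distrib_left algebra_simps)
  finally show ?thesis unfolding lam_def v_def .
qed

theorem channel_sum_le_single_state: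
  fixes Wc :: "'x::{finite,ab_group_add} \<times> 'z::finite \<Rightarrow> 'x \<times> 'z \<Rightarrow> real"
    and PXZ1 :: "'x \<times> 'z \<Rightarrow> real"
  assumes zz: "\<And>z::'z. z = z0" and W: "irr_aper_chain Wc" and P: "prob_vec PXZ1"
    and s: "s < 1" and n: "1 \<le> n"
  defines "B \<equiv> \<lambda>x x'. Wc (x, z0) (x', z0) powr (1 - s)"
  shows "channel_sum PXZ1 Wc n s
     \<le> real CARD('x) ^ n * (pf_root B ^ (n - 1) * dotp (pf_vec B) (\<lambda>x. PXZ1 (x, z0) powr (1 - s))
        / real CARD('x) ^ n) powr (1 / (1 - s))"
proof -
  define X where "X = real CARD('x)"
  define D where "D = pf_root B ^ (n - 1) * dotp (pf_vec B) (\<lambda>x. PXZ1 (x, z0) powr (1 - s))"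
  have "CARD('z) = 1"
    using zz by (metis card.empty card_insert_disjoint empty_iff finite.emptyI One_nat_def UNIV_eq_I singletonI)
  then have card_y: "card {y::('x \<times> 'z) list. length y = n} = CARD('x) ^ n"
    by (simp add: card_lists_length_eq_UNIV)
  have "channel_sum PXZ1 Wc n s \<le> (\<Sum>y\<in>{y::('x \<times> 'z) list. length y = n}. (D / X ^ n) powr (1 / (1 - s)))"
    unfolding channel_sum_def
  proof (rule sum_mono)
    fix y :: "('x \<times> 'z) list" assume "y \<in> {y. length y = n}"
    then have "(\<Sum>c\<in>{c::'x list. length c = n}. markov_prob PXZ1 Wc (noise y c) powr (1 - s)) \<le> D"
      using sum_noise_markov_prob_le_single_state[OF zz W P s, of y "n - 1"] n
      unfolding D_def B_def by simp
    then show "((\<Sum>c\<in>{c::'x list. length c = n}. markov_prob PXZ1 Wc (noise y c) powr (1 - s))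
            / card {c::'x list. length c = n}) powr (1 / (1 - s)) \<le> (D / X ^ n) powr (1 / (1 - s))"
      using s unfolding X_def by (intro powr_mono2)
        (auto simp: card_lists_length_eq_UNIV intro!: sum_nonneg divide_right_mono divide_nonneg_nonneg)
  qed
  also have "\<dots> = X ^ n * (D / X ^ n) powr (1 / (1 - s))"
    using card_y by (simp add: X_def)
  finally show ?thesis unfolding X_def D_def .
qed

subsection \<open>The conditional R\'enyi entropy \<^const>\<open>H_up\<close>\<close>

lemma bdd_above_H_cond_V:
  fixes Wc :: "'x::{finite,ab_group_add} \<times> 'z::finite \<Rightarrow> 'x \<times> 'z \<Rightarrow> real"
  assumes W: "stochastic Wc" and t: "0 < t" "t < 1"
  shows "bdd_above ((\<lambda>V. H_cond_V Wc V t) ` {V. admissible_V Wc V})"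
proof (rule bdd_aboveI2)
  fix V assume "V \<in> {V. admissible_V Wc V}"
  then have V: "stochastic V" by (simp add: admissible_V_def)
  define M where "M = (\<lambda>(x::'x, z::'z) (x', z'). Wc (x, z) (x', z') powr (1 - t) * V z z' powr t)"
  have "0 \<le> M a b \<and> M a b \<le> 1" for a b
    using t stochastic_nonneg[OF W] stochastic_le_1[OF W] stochastic_nonneg[OF V] stochastic_le_1[OF V]
    unfolding M_def by (cases a; cases b) (auto intro!: mult_le_one powr_le1)
  then have "ln (pf_root M) \<le> max (ln (real CARD('x \<times> 'z))) (ln (THE r::real. False))"
    by (intro ln_pf_root_le) auto
  then show "H_cond_V Wc V t \<le> 1 / t * max (ln (real CARD('x \<times> 'z))) (ln (THE r::real. False))"
    unfolding H_cond_V_def M_def[symmetric] using t by (intro mult_left_mono) auto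
qed

lemma H_cond_V_le_H_up:
  assumes "stochastic Wc" "0 < t" "t < 1" "admissible_V Wc V"
  shows "H_cond_V Wc V t \<le> H_up Wc t"
  unfolding H_up_def by (rule cSUP_upper) (use assms bdd_above_H_cond_V in auto)

text \<open>Under Assumption 2 (i), tilting by the Perron--Frobenius data \<open>(\<lambda>, v)\<close> of \<^const>\<open>K_mat\<close>
  gives the transition matrix \<open>V z z' = v z K z z' / (\<lambda> v z')\<close>, for which the matrix in
  \<^const>\<open>H_cond_V\<close> has the explicit left eigenvector \<open>(x, z) \<mapsto> v z\<^bsup>1-s\<^esup>\<close>.\<close>

lemma tilted_H_cond_V:
  fixes Wc :: "'x::{finite,ab_group_add} \<times> 'z::finite \<Rightarrow> 'x \<times> 'z \<Rightarrow> real"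
  assumes a2: "assm2_i Wc" and s: "0 < s" "s < 1"
    and eig: "pos_left_eigenpair (K_mat Wc s) lam v" and lam: "0 < lam"
  defines "V \<equiv> \<lambda>z z'. v z * K_mat Wc s z z' / (lam * v z')"
  shows "H_cond_V Wc V s = (1 - s) / s * ln lam"
proof -
  define K where "K = K_mat Wc s"
  have Kn: "\<And>a b. 0 \<le> K a b" unfolding K_def K_mat_eq_K_base_powr by simp
  have vpos: "\<And>z. 0 < v z" using eig by (simp add: pos_left_eigenpair_def)
  define M where "M = (\<lambda>(x::'x, z::'z) (x', z'). Wc (x, z) (x', z') powr (1 - s) * V z z' powr s)"
  have Mn: "0 \<le> M a b" for a b unfolding M_def by (cases a; cases b) simp
  define u where "u b = v (snd b) powr (1 - s)" for b :: "'x \<times> 'z"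
  have "pos_left_eigenpair M (lam powr (1 - s)) u"
    unfolding pos_left_eigenpair_def
  proof (intro conjI allI)
    fix i show "0 < u i" unfolding u_def using vpos[of "snd i"] by simp
  next
    fix j :: "'x \<times> 'z"
    obtain x' z' where j: "j = (x', z')" by (cases j)
    have "(\<Sum>i\<in>UNIV. u i * M i j) = (\<Sum>z\<in>UNIV. \<Sum>x\<in>UNIV. u (x, z) * M (x, z) j)"
      by (rule sum_UNIV_pair)
    also have "\<dots> = (\<Sum>z\<in>UNIV. v z powr (1 - s) * V z z' powr s * (\<Sum>x\<in>UNIV. Wc (x, z) (x', z') powr (1 - s)))"
      unfolding u_def M_def j by (simp add: sum_distrib_left algebra_simps)
    also have "\<dots> = (\<Sum>z\<in>UNIV. v z powr (1 - s) * (v z * K z z' / (lam * v z')) powr s * K z z' powr (1 - s))"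
      unfolding assm2_i_sum_eq_K_base[OF a2 s(2)] K_base_eq_K_mat_powr[OF s(2)] V_def K_def ..
    also have "\<dots> = (\<Sum>z\<in>UNIV. v z * K z z') / (lam powr s * v z' powr s)"
    proof -
      have "v z powr (1 - s) * (v z * K z z' / (lam * v z')) powr s * K z z' powr (1 - s)
          = (v z powr (1 - s) * v z powr s) * (K z z' powr s * K z z' powr (1 - s)) / (lam powr s * v z' powr s)"
        for z
        using vpos lam Kn by (simp add: powr_divide powr_mult)
      also have "\<dots> z = v z * K z z' / (lam powr s * v z' powr s)" for z
        using vpos[of z] Kn[of z z'] by (cases "K z z' = 0") (simp_all add: powr_add[symmetric])
      finally show ?thesis by (simp add: sum_divide_distrib)
    qed
    also have "\<dots> = lam powr (1 - s) * u j"
      using pos_left_eigenpairD(2)[OF eig, of z'] lam vpos[of z']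
      unfolding u_def j K_def by (simp add: mult.commute powr_diff powr_mult)
    finally show "(\<Sum>i\<in>UNIV. u i * M i j) = lam powr (1 - s) * u j" .
  qed
  then have "pf_root M = lam powr (1 - s)" by (rule pf_root_eqI[OF Mn])
  then show ?thesis
    unfolding H_cond_V_def M_def[symmetric] using lam by (simp add: ln_powr)
qed

theorem H_up_ge_assm2_i:
  fixes Wc :: "'x::{finite,ab_group_add} \<times> 'z::finite \<Rightarrow> 'x \<times> 'z \<Rightarrow> real"
  assumes a2: "assm2_i Wc" and W: "irr_aper_chain Wc" and s: "0 < s" "s < 1"
  shows "(1 - s) * ln (pf_root (K_mat Wc s)) \<le> s * H_up Wc s"
proof -
  have Wst: "stochastic Wc" using W by (simp add: irr_aper_chain_def)
  have Wn: "\<And>a b. 0 \<le> Wc a b" using Wst stochastic_nonneg by blast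
  define K where "K = K_mat Wc s"
  have Kn: "\<And>a b. 0 \<le> K a b" unfolding K_def K_mat_eq_K_base_powr by simp
  have irrK: "irreducible_mat K" unfolding K_def
    by (rule irreducible_K_mat[OF a2 s(2)]) (use W in \<open>simp add: irr_aper_chain_def\<close>)
  note pf = perron_frobenius[OF Kn irrK]
  define lam where "lam = pf_root K"
  define v where "v = pf_vec K"
  have lam: "0 < lam" using pf(2) unfolding lam_def .
  have vpos: "\<And>z. 0 < v z" using pf(1) unfolding v_def by (simp add: pos_left_eigenpair_def)
  define V where "V z z' = v z * K z z' / (lam * v z')" for z z'
  have "admissible_V Wc V"
    unfolding admissible_V_def stochastic_def
  proof (intro conjI allI impI)
    show "0 \<le> V a b" for a b unfolding V_def using vpos[of a] vpos[of b] lam Kn[of a b] by simp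
    show "(\<Sum>a\<in>UNIV. V a b) = 1" for b
      using pos_left_eigenpairD(2)[OF pf(1), of b] lam vpos[of b]
      unfolding V_def lam_def v_def by (simp add: sum_divide_distrib[symmetric] mult.commute)
  next
    fix z z' assume "0 < WcZ Wc z z'"
    then obtain x where "0 < Wc (x, z) (0, z')"
      unfolding WcZ_def using Wn by (metis not_less sum_nonpos)
    then have "0 < K_base Wc s z z'" by (rule K_base_pos[OF a2 s(2)])
    then have "0 < K z z'" unfolding K_def K_mat_eq_K_base_powr by simp
    then show "0 < V z z'" unfolding V_def using vpos lam by simp
  qed
  then have "H_cond_V Wc V s \<le> H_up Wc s" by (rule H_cond_V_le_H_up[OF Wst s])
  moreover have "H_cond_V Wc V s = (1 - s) / s * ln lam"
    unfolding V_def[abs_def] K_def lam_def v_def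
    by (rule tilted_H_cond_V[OF a2 s pf(1)[unfolded K_def] lam[unfolded lam_def K_def]])
  ultimately have "(1 - s) / s * ln lam \<le> H_up Wc s" by simp
  then show ?thesis using s unfolding lam_def K_def by (simp add: field_simps)
qed

lemma admissible_V_single_state:
  fixes Wc :: "'x::{finite,ab_group_add} \<times> 'z::finite \<Rightarrow> 'x \<times> 'z \<Rightarrow> real"
  assumes zz: "\<And>z::'z. z = z0"
  shows "{V. admissible_V Wc V} = {\<lambda>_ _. 1}"
proof -
  have UZ: "(UNIV::'z set) = {z0}" using zz by auto
  show ?thesis
  proof (intro set_eqI iffI)
    fix V assume "V \<in> {V. admissible_V Wc V}"
    then have "(\<Sum>a\<in>UNIV. V a z0) = 1" by (simp add: admissible_V_def stochastic_def)
    then show "V \<in> {\<lambda>_ _. 1}" unfolding UZ by (auto intro!: ext) (metis zz)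
  next
    fix V :: "'z \<Rightarrow> 'z \<Rightarrow> real" assume "V \<in> {\<lambda>_ _. 1}"
    then show "V \<in> {V. admissible_V Wc V}" unfolding UZ admissible_V_def stochastic_def by simp
  qed
qed

theorem H_up_single_state:
  fixes Wc :: "'x::{finite,ab_group_add} \<times> 'z::finite \<Rightarrow> 'x \<times> 'z \<Rightarrow> real"
  assumes zz: "\<And>z::'z. z = z0" and W: "irr_aper_chain Wc" and s: "0 < s" "s < 1"
  shows "s * H_up Wc s = ln (pf_root (\<lambda>x x'. Wc (x, z0) (x', z0) powr (1 - s)))"
proof -
  have UZ: "(UNIV::'z set) = {z0}" using zz by auto
  define B where "B = (\<lambda>x x'. Wc (x, z0) (x', z0) powr (1 - s))"
  have Bn: "\<And>a b. 0 \<le> B a b" unfolding B_def by simp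
  have irrB: "irreducible_mat B" unfolding B_def
    by (rule irreducible_single_state[OF zz]) (use W in \<open>simp add: irr_aper_chain_def\<close>)
  note pf = perron_frobenius[OF Bn irrB]
  define V1 :: "'z \<Rightarrow> 'z \<Rightarrow> real" where "V1 = (\<lambda>_ _. 1)"
  have adm: "{V. admissible_V Wc V} = {V1}" unfolding V1_def by (rule admissible_V_single_state[OF zz])
  define M where "M = (\<lambda>(x::'x, z::'z) (x', z'). Wc (x, z) (x', z') powr (1 - s) * V1 z z' powr s)"
  have Mn: "0 \<le> M a b" for a b unfolding M_def by (cases a; cases b) simp
  have "pos_left_eigenpair M (pf_root B) (\<lambda>b. pf_vec B (fst b))"
    unfolding pos_left_eigenpair_def
  proof (intro conjI allI)
    fix i show "0 < pf_vec B (fst i)" using pf(3) by (meson less_le_trans zero_less_one)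
  next
    fix j :: "'x \<times> 'z"
    obtain x' where j: "j = (x', z0)" using zz by (metis prod.collapse)
    have "(\<Sum>i\<in>UNIV. pf_vec B (fst i) * M i j) = (\<Sum>z\<in>UNIV. \<Sum>x\<in>UNIV. pf_vec B x * M (x, z) j)"
      using sum_UNIV_pair[of "\<lambda>i. pf_vec B (fst i) * M i j"] by simp
    also have "\<dots> = (\<Sum>x\<in>UNIV. pf_vec B x * B x x')"
      unfolding UZ M_def j B_def V1_def by simp
    also have "\<dots> = pf_root B * pf_vec B (fst j)"
      using pf(1) unfolding pos_left_eigenpair_def j by simp
    finally show "(\<Sum>i\<in>UNIV. pf_vec B (fst i) * M i j) = pf_root B * pf_vec B (fst j)" .
  qed
  then have "pf_root M = pf_root B" by (rule pf_root_eqI[OF Mn])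
  moreover have "H_up Wc s = 1 / s * ln (pf_root M)"
    unfolding H_up_def adm H_cond_V_def M_def by simp
  ultimately have "H_up Wc s = 1 / s * ln (pf_root B)" by simp
  then show ?thesis using s unfolding B_def by simp
qed

lemma sum_le_sum_powr_powr:
  fixes a :: "'i \<Rightarrow> real"
  assumes I: "finite I" and a: "\<And>i. 0 \<le> a i" and \<sigma>: "0 < \<sigma>" "\<sigma> \<le> 1"
  shows "(\<Sum>i\<in>I. a i) \<le> (\<Sum>i\<in>I. a i powr \<sigma>) powr (1 / \<sigma>)"
proof (cases "(\<Sum>i\<in>I. a i) = 0")
  case False
  define A where "A = (\<Sum>i\<in>I. a i)"
  have A: "0 < A" using False a unfolding A_def by (simp add: less_le sum_nonneg)
  have le: "a i / A \<le> (a i / A) powr \<sigma>" if "i \<in> I" for i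
  proof (cases "a i = 0")
    case False
    have "a i \<le> A" unfolding A_def by (rule member_le_sum) (use that a I in auto)
    then have "(a i / A) powr 1 \<le> (a i / A) powr \<sigma>"
      using False a[of i] A \<sigma> by (intro powr_mono') auto
    then show ?thesis using a[of i] A by simp
  qed simp
  have "1 = (\<Sum>i\<in>I. a i / A)" using A unfolding A_def by (simp add: sum_divide_distrib[symmetric])
  also have "\<dots> \<le> (\<Sum>i\<in>I. (a i / A) powr \<sigma>)" by (rule sum_mono) (rule le)
  also have "\<dots> = (\<Sum>i\<in>I. a i powr \<sigma>) / A powr \<sigma>"
    using a A by (simp add: powr_divide sum_divide_distrib)
  finally have "A powr \<sigma> \<le> (\<Sum>i\<in>I. a i powr \<sigma>)" using A by (simp add: field_simps)
  then have "(A powr \<sigma>) powr (1 / \<sigma>) \<le> (\<Sum>i\<in>I. a i powr \<sigma>) powr (1 / \<sigma>)"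
    by (intro powr_mono2) (use \<sigma> in auto)
  then show ?thesis using A \<sigma> by (simp add: powr_powr A_def)
qed (simp add: sum_nonneg)

lemma source_sum_le_exp:
  assumes P: "prob_vec PM1" and W: "irr_aper_chain Ws" and s: "s < 1" and k: "1 \<le> k"
  shows "source_sum PM1 Ws k s \<le> exp (real (k - 1) * thetaH_s Ws s + xi_s PM1 Ws s)"
proof -
  note pf = perron_frobenius[OF _ irreducible_As[OF W s], unfolded As_def, simplified, folded As_def]
  obtain j where "0 < PM1 j" using prob_vec_ex_pos[OF P] by blast
  then have "0 < dotp (pf_vec (As Ws s)) (\<lambda>m. PM1 m powr (1 - s))"
    by (intro dotp_pos[of _ _ j]) (use pf(3) in auto)
  then show ?thesis
    using source_sum_le[OF P W s k] pf(2)
    by (simp add: thetaH_s_def xi_s_def exp_add ln_realpow[symmetric])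
qed

lemma source_sum_powr_le_exp:
  assumes "prob_vec PM1" "irr_aper_chain Ws" "s < 1" "1 \<le> k"
  shows "source_sum PM1 Ws k s powr (1 / (1 - s))
    \<le> exp ((real (k - 1) * thetaH_s Ws s + xi_s PM1 Ws s) / (1 - s))"
proof -
  have "source_sum PM1 Ws k s powr (1 / (1 - s))
      \<le> exp (real (k - 1) * thetaH_s Ws s + xi_s PM1 Ws s) powr (1 / (1 - s))"
    using source_sum_le_exp[OF assms] assms(3)
    by (intro powr_mono2) (simp_all add: source_sum_def sum_nonneg)
  then show ?thesis by (simp add: powr_def)
qed

lemma dotp_marginal_powr_ge_1:
  fixes PXZ1 :: "'x::finite \<times> 'z::finite \<Rightarrow> real"
  assumes P: "prob_vec PXZ1" and v: "\<And>z. 1 \<le> v z" and s: "0 < s" "s < 1"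
  shows "1 \<le> dotp v (\<lambda>z. (\<Sum>x\<in>UNIV. PXZ1 (x, z) powr (1 - s)) powr (1 / (1 - s)))"
proof -
  have "1 = (\<Sum>z\<in>UNIV. \<Sum>x\<in>UNIV. PXZ1 (x, z))" using P sum_UNIV_pair[of PXZ1] by (simp add: prob_vec_def)
  also have "\<dots> \<le> (\<Sum>z\<in>UNIV. (\<Sum>x\<in>UNIV. PXZ1 (x, z) powr (1 - s)) powr (1 / (1 - s)))"
    by (intro sum_mono sum_le_sum_powr_powr) (use prob_vec_nonneg[OF P] s in auto)
  also have "\<dots> \<le> dotp v (\<lambda>z. (\<Sum>x\<in>UNIV. PXZ1 (x, z) powr (1 - s)) powr (1 / (1 - s)))"
    unfolding dotp_def using v by (intro sum_mono) (simp add: mult_le_cancel_right1)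
  finally show ?thesis .
qed

lemma channel_sum_le_exp_assm2_i:
  fixes Wc :: "'x::{finite,ab_group_add} \<times> 'z::finite \<Rightarrow> 'x \<times> 'z \<Rightarrow> real"
  assumes a2: "assm2_i Wc" and W: "irr_aper_chain Wc" and P: "prob_vec PXZ1"
    and s: "0 < s" "s < 1" and n: "1 \<le> n"
  shows "channel_sum PXZ1 Wc n s
    \<le> exp ((- real n * s * ln (real CARD('x)) + (real n - 1) * (s * H_up Wc s) + xi_c PXZ1 Wc s) / (1 - s))"
proof -
  define X where "X = real CARD('x)"
  have X0: "0 < X" unfolding X_def by simp
  have Kn: "\<And>a b. 0 \<le> K_mat Wc s a b" unfolding K_mat_eq_K_base_powr by simp
  have irrK: "irreducible_mat (K_mat Wc s)"
    by (rule irreducible_K_mat[OF a2 s(2)]) (use W in \<open>simp add: irr_aper_chain_def\<close>)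
  note pf = perron_frobenius[OF Kn irrK]
  define lam where "lam = pf_root (K_mat Wc s)"
  define D where "D = dotp (pf_vec (K_mat Wc s)) (\<lambda>z. (\<Sum>x\<in>UNIV. PXZ1 (x, z) powr (1 - s)) powr (1 / (1 - s)))"
  have lam: "0 < lam" using pf(2) unfolding lam_def .
  have D: "1 \<le> D"
    unfolding D_def by (rule dotp_marginal_powr_ge_1[OF P pf(3) s])
  have "channel_sum PXZ1 Wc n s \<le> X ^ n / X powr (real n / (1 - s)) * lam ^ (n - 1) * D"
    unfolding X_def lam_def D_def by (rule channel_sum_le_assm2_i[OF a2 W P s(2) n])
  also have "\<dots> = exp (real n * ln X - real n / (1 - s) * ln X + real (n - 1) * ln lam + ln D)"
  proof -
    have "X ^ n = exp (real n * ln X)" using X0 by (simp add: ln_realpow[symmetric])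
    moreover have "X powr (real n / (1 - s)) = exp (real n / (1 - s) * ln X)" using X0 by (simp add: powr_def)
    moreover have "lam ^ (n - 1) = exp (real (n - 1) * ln lam)" using lam by (simp add: ln_realpow[symmetric])
    moreover have "D = exp (ln D)" using D by simp
    ultimately show ?thesis by (simp add: exp_add exp_diff)
  qed
  also have "\<dots> \<le> exp ((- real n * s * ln X + (real n - 1) * (s * H_up Wc s) + ln D) / (1 - s))"
  proof -
    have "(1 - s) * ln lam \<le> s * H_up Wc s" unfolding lam_def by (rule H_up_ge_assm2_i[OF a2 W s])
    then have "ln lam \<le> s * H_up Wc s / (1 - s)" using s by (simp add: field_simps)
    then have "(real n - 1) * ln lam \<le> (real n - 1) * (s * H_up Wc s / (1 - s))"
      using n by (intro mult_left_mono) auto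
    then have "real (n - 1) * ln lam \<le> (real n - 1) * (s * H_up Wc s / (1 - s))"
      using n by (simp only: of_nat_diff) simp
    moreover have "ln D * (1 - s) \<le> ln D" using D s by (intro mult_left_le) auto
    then have "ln D \<le> ln D / (1 - s)" using s by (simp add: divide_simps)
    moreover have "real n * ln X - real n / (1 - s) * ln X = - real n * s * ln X / (1 - s)"
      using s by (simp add: divide_simps algebra_simps)
    moreover have "(- real n * s * ln X + (real n - 1) * (s * H_up Wc s) + ln D) / (1 - s)
        = - real n * s * ln X / (1 - s) + (real n - 1) * (s * H_up Wc s / (1 - s)) + ln D / (1 - s)"
      by (simp add: add_divide_distrib diff_divide_distrib)
    ultimately show ?thesis unfolding exp_le_cancel_iff by linarith
  qed
  finally show ?thesis unfolding X_def D_def xi_c_def using a2 by simp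
qed

lemma channel_sum_le_exp_single_state:
  fixes Wc :: "'x::{finite,ab_group_add} \<times> 'z::finite \<Rightarrow> 'x \<times> 'z \<Rightarrow> real"
  assumes z1: "CARD('z) = 1" and a2: "\<not> assm2_i Wc" and W: "irr_aper_chain Wc" and P: "prob_vec PXZ1"
    and s: "0 < s" "s < 1" and n: "1 \<le> n"
  shows "channel_sum PXZ1 Wc n s
    \<le> exp ((- real n * s * ln (real CARD('x)) + (real n - 1) * (s * H_up Wc s) + xi_c PXZ1 Wc s) / (1 - s))"
proof -
  obtain z0 :: 'z where "UNIV = {z0}" using z1 by (rule card_1_singletonE)
  then have zz: "\<And>z::'z. z = undefined" by (metis UNIV_I singletonD)
  define X where "X = real CARD('x)"
  have X0: "0 < X" unfolding X_def by simp
  define B where "B = (\<lambda>x x'. Wc (x, undefined::'z) (x', undefined) powr (1 - s))"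
  have Bn: "\<And>a b. 0 \<le> B a b" unfolding B_def by simp
  have irrB: "irreducible_mat B" unfolding B_def
    by (rule irreducible_single_state[OF zz]) (use W in \<open>simp add: irr_aper_chain_def\<close>)
  note pf = perron_frobenius[OF Bn irrB]
  define lam where "lam = pf_root B"
  define D where "D = dotp (pf_vec B) (\<lambda>x. PXZ1 (x, undefined) powr (1 - s))"
  have lam: "0 < lam" using pf(2) unfolding lam_def .
  have D: "0 < D"
  proof -
    obtain j where "0 < PXZ1 j" using prob_vec_ex_pos[OF P] by blast
    then have "0 < PXZ1 (fst j, undefined)" using zz[of "snd j"] by (metis prod.collapse)
    then show ?thesis unfolding D_def by (intro dotp_pos[of _ _ "fst j"]) (use pf(3) in auto)
  qed
  have "channel_sum PXZ1 Wc n s \<le> X ^ n * (lam ^ (n - 1) * D / X ^ n) powr (1 / (1 - s))"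
    unfolding X_def lam_def D_def B_def by (rule channel_sum_le_single_state[OF zz W P s(2) n])
  also have "\<dots> = exp (real n * ln X + (real (n - 1) * ln lam + ln D - real n * ln X) / (1 - s))"
  proof -
    have "lam ^ (n - 1) * D / X ^ n = exp (real (n - 1) * ln lam + ln D - real n * ln X)"
      using lam D X0 by (simp add: exp_add exp_diff ln_realpow[symmetric])
    then show ?thesis using X0 by (simp add: powr_def exp_add ln_realpow[symmetric])
  qed
  also have "\<dots> = exp ((- real n * s * ln X + (real n - 1) * (s * H_up Wc s) + xi_c PXZ1 Wc s) / (1 - s))"
  proof -
    have "s * H_up Wc s = ln lam" unfolding lam_def B_def by (rule H_up_single_state[OF zz W s])
    moreover have "xi_c PXZ1 Wc s = ln D" using a2 by (simp add: xi_c_def D_def B_def)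
    ultimately show ?thesis using n s by (simp add: of_nat_diff divide_simps algebra_simps)
  qed
  finally show ?thesis unfolding X_def .
qed

lemma channel_sum_le_exp:
  fixes Wc :: "'x::{finite,ab_group_add} \<times> 'z::finite \<Rightarrow> 'x \<times> 'z \<Rightarrow> real"
  assumes "assm2 Wc" "irr_aper_chain Wc" "prob_vec PXZ1" "0 < s" "s < 1" "1 \<le> n"
  shows "channel_sum PXZ1 Wc n s
    \<le> exp ((- real n * s * ln (real CARD('x)) + (real n - 1) * (s * H_up Wc s) + xi_c PXZ1 Wc s) / (1 - s))"
  using assms channel_sum_le_exp_assm2_i channel_sum_le_exp_single_state
  unfolding assm2_def by blast

lemma Pj_le_code_error:
  assumes PM: "prob_vec PM1" "irr_aper_chain Ws" and PX: "prob_vec PXZ1" "irr_aper_chain Wc"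
    and e: "\<forall>ms. length ms = k \<longrightarrow> length (e ms) = n"
  shows "Pj PM1 Ws PXZ1 Wc k n \<le> code_error PM1 Ws PXZ1 Wc k n e d"
  unfolding Pj_def
proof (rule cInf_lower)
  show "code_error PM1 Ws PXZ1 Wc k n e d
    \<in> {code_error PM1 Ws PXZ1 Wc k n e d |e d. \<forall>ms. length ms = k \<longrightarrow> length (e ms) = n}"
    using e by blast
  have "0 \<le> code_error PM1 Ws PXZ1 Wc k n e' d'" for e' d'
    unfolding code_error_def
    using markov_prob_nonneg[OF prob_vec_nonneg[OF PM(1)] irr_aper_chain_nonneg[OF PM(2)]]
      markov_prob_nonneg[OF prob_vec_nonneg[OF PX(1)] irr_aper_chain_nonneg[OF PX(2)]]
    by (intro sum_nonneg mult_nonneg_nonneg) simp_all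
  then show "bdd_below {code_error PM1 Ws PXZ1 Wc k n e d |e d. \<forall>ms. length ms = k \<longrightarrow> length (e ms) = n}"
    by (auto intro: bdd_belowI[of _ 0])
qed

theorem Pj_le_source_sum_channel_sum:
  fixes PM1 :: "'m::finite \<Rightarrow> real" and PXZ1 :: "'x::{finite,ab_group_add} \<times> 'z::finite \<Rightarrow> real"
  assumes PM: "prob_vec PM1" "irr_aper_chain Ws" and PX: "prob_vec PXZ1" "irr_aper_chain Wc"
    and s: "0 < s" "s \<le> 1/2"
  shows "Pj PM1 Ws PXZ1 Wc k n \<le> source_sum PM1 Ws k s powr (1 / (1 - s)) * channel_sum PXZ1 Wc n s"
proof -
  note nonneg = prob_vec_nonneg[OF PM(1)] irr_aper_chain_nonneg[OF PM(2)]
    prob_vec_nonneg[OF PX(1)] irr_aper_chain_nonneg[OF PX(2)]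
  have ne: "replicate k undefined \<in> {ms::'m list. length ms = k}" "replicate n 0 \<in> {c::'x list. length c = n}"
    by simp_all
  have "\<exists>e\<in>PiE {ms::'m list. length ms = k} (\<lambda>_. {c::'x list. length c = n}). \<exists>d.
      code_error PM1 Ws PXZ1 Wc k n e d \<le> source_sum PM1 Ws k s powr (1 / (1 - s)) * channel_sum PXZ1 Wc n s"
    unfolding code_error_def source_sum_def channel_sum_def noise_def[symmetric]
    by (rule gallager_random_coding[OF _ _ _ _ markov_prob_nonneg markov_prob_nonneg s])
      (use finite_lists_length_eq_UNIV ne nonneg in blast)+
  then obtain e d where e: "e \<in> PiE {ms::'m list. length ms = k} (\<lambda>_. {c::'x list. length c = n})"
    and ed: "code_error PM1 Ws PXZ1 Wc k n e d
      \<le> source_sum PM1 Ws k s powr (1 / (1 - s)) * channel_sum PXZ1 Wc n s"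
    by blast
  have "\<forall>ms. length ms = k \<longrightarrow> length (e ms) = n" using e by (auto dest: PiE_mem)
  then have "Pj PM1 Ws PXZ1 Wc k n \<le> code_error PM1 Ws PXZ1 Wc k n e d"
    by (rule Pj_le_code_error[OF PM PX])
  then show ?thesis using ed by simp
qed

lemma mult_U_up_eq:
  assumes "real n \<noteq> 1"
  shows "(real n - 1) * U_up Ws Wc ((real k - 1) / (real n - 1)) s
    = (real k - 1) * thetaH_s Ws s + (real n - 1) * (s * H_up Wc s)"
  using assms unfolding U_up_def by (simp add: distrib_left)

theorem mainTheorem11:
  fixes PM1 :: "'m::finite \<Rightarrow> real" and Ws :: "'m \<Rightarrow> 'm \<Rightarrow> real"
    and PXZ1 :: "'x::{finite,ab_group_add} \<times> 'z::finite \<Rightarrow> real"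
    and Wc :: "'x \<times> 'z \<Rightarrow> 'x \<times> 'z \<Rightarrow> real"
    and k n :: nat
  assumes "prob_vec PM1" and "irr_aper_chain Ws"
    and "prob_vec PXZ1" and "irr_aper_chain Wc"
    and "assm2 Wc"
    and "2 \<le> k" and "2 \<le> n"
  shows "\<forall>s\<in>{0<..1/2::real}.
           Pj PM1 Ws PXZ1 Wc k n \<le>
           exp ((- real n * s * ln (real CARD('x))
                  + (real n - 1) * U_up Ws Wc ((real k - 1) / (real n - 1)) s) / (1 - s)
                + (xi_s PM1 Ws s + xi_c PXZ1 Wc s) / (1 - s))"
proof
  fix s :: real assume "s \<in> {0<..1/2}"
  then have s: "0 < s" "s \<le> 1/2" "s < 1" by auto
  have source: "source_sum PM1 Ws k s powr (1 / (1 - s))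
      \<le> exp ((real (k - 1) * thetaH_s Ws s + xi_s PM1 Ws s) / (1 - s))"
    by (rule source_sum_powr_le_exp) (use assms s in auto)
  have channel: "channel_sum PXZ1 Wc n s
      \<le> exp ((- real n * s * ln (real CARD('x)) + (real n - 1) * (s * H_up Wc s) + xi_c PXZ1 Wc s) / (1 - s))"
    by (rule channel_sum_le_exp) (use assms s in auto)
  have "Pj PM1 Ws PXZ1 Wc k n \<le> source_sum PM1 Ws k s powr (1 / (1 - s)) * channel_sum PXZ1 Wc n s"
    by (rule Pj_le_source_sum_channel_sum[OF assms(1-4) s(1,2)])
  also have "\<dots> \<le> exp ((real (k - 1) * thetaH_s Ws s + xi_s PM1 Ws s) / (1 - s))
      * exp ((- real n * s * ln (real CARD('x)) + (real n - 1) * (s * H_up Wc s) + xi_c PXZ1 Wc s) / (1 - s))"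
    by (rule mult_mono[OF source channel]) (simp_all add: channel_sum_def sum_nonneg)
  also have "\<dots> = exp ((- real n * s * ln (real CARD('x))
                  + (real n - 1) * U_up Ws Wc ((real k - 1) / (real n - 1)) s) / (1 - s)
                + (xi_s PM1 Ws s + xi_c PXZ1 Wc s) / (1 - s))"
    using mult_U_up_eq[of n Ws Wc k s] assms(6,7)
    by (simp add: of_nat_diff flip: exp_add add_divide_distrib)
  finally show "Pj PM1 Ws PXZ1 Wc k n \<le> \<dots>" .
qed

end
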